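(* Let $F:\mathbb{R}^d\to\mathbb{R}^d$ be a locally bounded measurable function, $(\xi_n)_{n\in\mathbb{Z}_+}$ i.i.d. non-degenerate Gaussian random vectors in $\mathbb{R}^d$, and $(X_n)$ the perturbed dynamical system $X_{n+1}=F(X_n)+\xi_n$. Let $E\subset\mathbb{R}^d$ be measurable with positive Lebesgue measure and $G:E\to(0,+\infty)$ measurable, and define for $x\in E$ the Feynman–Kac semigroup $$P_nf(x)=\mathbb{E}_x\Big(\prod_{k=1}^nG(X_k)\mathbf 1_{X_k\in E}\,f(X_n)\Big).$$ Assume that $1/G$ is locally bounded, that $G(x)\le C\exp(|x|)$ for all $x\in E$ and some constant $C>0$, and that there exists $p>1$ such that $|x|-p|F(x)|\to+\infty$ as $|x|\to+\infty$. Then $(P_n)_{n\in\mathbb{N}}$ (on the state space $E$) satisfies Condition (G).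
   Context: $\mathbb{E}_x$ denotes expectation for the chain started at $X_0=x$. Condition (G) for a semigroup $(P_n)_{n\in\mathbb{Z}_+}$ of positive operators on state space $E$: there exist positive real constants $\theta_1,\theta_2,c_1,c_2,c_3$, an integer $n_1\ge1$, functions $\psi_1:E\to(0,+\infty)$, $\psi_2:E\to\mathbb{R}_+$, a measurable subset $K\subset E$ and a probability measure $\nu$ on $K$ such that (G1) for all $x\in K$ and all measurable $A\subset K$, $P_{n_1}(\psi_1\mathbf 1_A)(x)\ge c_1\nu(A)\psi_1(x)$; (G2) $\theta_1<\theta_2$, $\inf_{x\in K}\psi_2(x)/\psi_1(x)>0$, $\sup_{x\in E}\psi_2(x)/\psi_1(x)\le1$, $P_1\psi_1(x)\le\theta_1\psi_1(x)+c_2\mathbf 1_K(x)\psi_1(x)$ for all $x\in E$, and $P_1\psi_2(x)\ge\theta_2\psi_2(x)$ for all $x\in E$; (G3) $\sup_{n\in\mathbb{Z}_+}\dfrac{\sup_{y\in K}P_n\psi_1(y)/\psi_1(y)}{\inf_{y\in K}P_n\psi_1(y)/\psi_1(y)}\le c_3$; (G4) for all $x\in K$ there exists $n_4(x)$ such that for all $n\ge n_4(x)$, $P_n(\mathbf 1_K\psi_1)(x)>0$. *)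

theory Defs
  imports "HOL-Analysis.Analysis" "HOL-Probability.Probability"
begin

definition gaussian_density :: "real^'d \<Rightarrow> real^'d^'d \<Rightarrow> real^'d \<Rightarrow> real" where
  "gaussian_density m S x =
     exp (- ((x - m) \<bullet> (matrix_inv S *v (x - m))) / 2) / sqrt ((2 * pi) ^ CARD('d) * det S)"

definition nondegenerate_covariance :: "real^'d^'d \<Rightarrow> bool" where
  "nondegenerate_covariance S \<longleftrightarrow> transpose S = S \<and> (\<forall>v. v \<noteq> 0 \<longrightarrow> v \<bullet> (S *v v) > 0)"

definition locally_bounded_on :: "'a::metric_space set \<Rightarrow> ('a \<Rightarrow> 'b::real_normed_vector) \<Rightarrow> bool" where
  "locally_bounded_on S f \<longleftrightarrow> (\<forall>x. \<exists>e>0. bounded (f ` (ball x e \<inter> S)))"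

text \<open>Feynman--Kac semigroup of the chain X_{n+1} = F(X_n) + xi_n, xi_n iid N(m,S):
  P_0 f = f,  P_{n+1} f(x) = E_x[ G(X_1) 1_E(X_1) P_n f(X_1) ]  (Markov property),
  where X_1 has density y \<mapsto> gaussian_density m S (y - F x) under P_x.\<close>
fun fk_semigroup :: "(real^'d \<Rightarrow> real^'d) \<Rightarrow> real^'d \<Rightarrow> real^'d^'d \<Rightarrow> (real^'d) set
    \<Rightarrow> (real^'d \<Rightarrow> real) \<Rightarrow> nat \<Rightarrow> (real^'d \<Rightarrow> ennreal) \<Rightarrow> real^'d \<Rightarrow> ennreal" where
  "fk_semigroup F m S E G 0 f x = f x"
| "fk_semigroup F m S E G (Suc n) f x =
     (\<integral>\<^sup>+ y. ennreal (gaussian_density m S (y - F x)) * ennreal (G y) * indicator E y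
              * fk_semigroup F m S E G n f y \<partial>lborel)"

definition condition_G :: "'a measure \<Rightarrow> (nat \<Rightarrow> ('a \<Rightarrow> ennreal) \<Rightarrow> 'a \<Rightarrow> ennreal) \<Rightarrow> bool" where
  "condition_G M P \<longleftrightarrow>
    (\<exists>\<theta>1 \<theta>2 c1 c2 c3 :: real. \<exists>n1 :: nat. \<exists>\<psi>1 \<psi>2 :: 'a \<Rightarrow> real. \<exists>K. \<exists>\<nu> :: 'a measure.
       \<theta>1 > 0 \<and> \<theta>2 > 0 \<and> c1 > 0 \<and> c2 > 0 \<and> c3 > 0 \<and> n1 \<ge> 1 \<and>
       \<psi>1 \<in> borel_measurable M \<and> \<psi>2 \<in> borel_measurable M \<and>
       (\<forall>x\<in>space M. \<psi>1 x > 0) \<and> (\<forall>x\<in>space M. \<psi>2 x \<ge> 0) \<and>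
       K \<in> sets M \<and> prob_space \<nu> \<and> sets \<nu> = sets (restrict_space M K) \<and>
       \<comment> \<open>(G1)\<close>
       (\<forall>x\<in>K. \<forall>A\<in>sets M. A \<subseteq> K \<longrightarrow>
          P n1 (\<lambda>y. ennreal (\<psi>1 y) * indicator A y) x \<ge> ennreal c1 * emeasure \<nu> A * ennreal (\<psi>1 x)) \<and>
       \<comment> \<open>(G2)\<close>
       \<theta>1 < \<theta>2 \<and> (INF x\<in>K. \<psi>2 x / \<psi>1 x) > 0 \<and> (\<forall>x\<in>space M. \<psi>2 x / \<psi>1 x \<le> 1) \<and>
       (\<forall>x\<in>space M. P 1 (\<lambda>y. ennreal (\<psi>1 y)) x
           \<le> ennreal (\<theta>1 * \<psi>1 x + c2 * indicator K x * \<psi>1 x)) \<and>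
       (\<forall>x\<in>space M. P 1 (\<lambda>y. ennreal (\<psi>2 y)) x \<ge> ennreal (\<theta>2 * \<psi>2 x)) \<and>
       \<comment> \<open>(G3)\<close>
       (\<forall>n. (SUP y\<in>K. P n (\<lambda>z. ennreal (\<psi>1 z)) y / ennreal (\<psi>1 y))
             / (INF y\<in>K. P n (\<lambda>z. ennreal (\<psi>1 z)) y / ennreal (\<psi>1 y)) \<le> ennreal c3) \<and>
       \<comment> \<open>(G4)\<close>
       (\<forall>x\<in>K. \<exists>n4. \<forall>n\<ge>n4. P n (\<lambda>y. indicator K y * ennreal (\<psi>1 y)) x > 0))"

end

theory Submission
  imports Defs
begin

(* With beta = 1/(p - 1), psi1(x) = exp(beta |x|) is a Lyapunov function: one step of the
   Gaussian kernel, weighted by G <= C exp |x|, multiplies it by at most a constant times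
   exp(- beta (|x| - p |F x|)), which tends to 0.  Hence outside a large bounded set
   K = E \<inter> cball 0 R the semigroup contracts psi1 by any prescribed factor theta1, while on K
   the kernel is bounded below, which gives the minorization (G1).  A second function psi2,
   built from P_1 1_K0 for a fixed bounded piece K0 of E of positive measure, satisfies
   P_1 psi2 >= theta2 psi2 with theta2 depending only on K0, so theta1 < theta2 is arranged by
   enlarging K.  Finally (G3) is a Harnack inequality: for starting points in K the Gaussian
   kernels are comparable on every ball and uniformly small against psi1 outside it, and an
   induction over n, which controls P_n psi1 on all of E through the suprema of P_k psi1 / psi1
   over K for k <= n, makes the comparison constant independent of n. *)

section \<open>Gaussian densities\<close>

lemma pos_def_invertible:
  fixes S :: "real^'d^'d"
  assumes pd: "\<And>v. v \<noteq> 0 \<Longrightarrow> v \<bullet> (S *v v) > 0"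
  shows "invertible S"
proof -
  have "inj ((*v) S)"
    unfolding vec.inj_iff_eq_0
  proof (intro allI impI)
    fix x assume "S *v x = 0"
    then show "x = 0" using pd[of x] by fastforce
  qed
  then show ?thesis using matrix_left_invertible_injective invertible_left_inverse by blast
qed

lemma matrix_inv_pos_def:
  fixes S :: "real^'d^'d"
  assumes pd: "\<And>v. v \<noteq> 0 \<Longrightarrow> v \<bullet> (S *v v) > 0" and "v \<noteq> 0"
  shows "v \<bullet> (matrix_inv S *v v) > 0"
proof -
  define w where "w = matrix_inv S *v v"
  have "S ** matrix_inv S = mat 1"
    using pos_def_invertible[OF pd] unfolding invertible_def matrix_inv_def by (rule someI2_ex) auto
  then have v: "v = S *v w" unfolding w_def by (simp add: matrix_vector_mul_assoc)
  then have "w \<noteq> 0" using \<open>v \<noteq> 0\<close> by auto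
  then have "w \<bullet> (S *v w) > 0" using pd by blast
  then show ?thesis unfolding w_def[symmetric] using v by (simp add: inner_commute)
qed

lemma quadratic_form_bounds:
  fixes M :: "real^'d^'d"
  assumes pos: "\<And>v. v \<noteq> 0 \<Longrightarrow> v \<bullet> (M *v v) > 0"
  obtains a b where "a > 0" "b > 0"
    "\<And>u. a * norm u ^ 2 \<le> u \<bullet> (M *v u)" "\<And>u. u \<bullet> (M *v u) \<le> b * norm u ^ 2"
proof -
  have cont: "continuous_on (sphere 0 1) (\<lambda>u::real^'d. u \<bullet> (M *v u))"
    by (intro continuous_intros linear_continuous_on matrix_vector_mul_linear)
  obtain x0 where x0: "x0 \<in> sphere 0 1" "\<forall>y\<in>sphere 0 1. x0 \<bullet> (M *v x0) \<le> y \<bullet> (M *v y)"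
    using continuous_attains_inf[OF compact_sphere _ cont] by auto
  obtain x1 where x1: "x1 \<in> sphere 0 1" "\<forall>y\<in>sphere 0 1. y \<bullet> (M *v y) \<le> x1 \<bullet> (M *v x1)"
    using continuous_attains_sup[OF compact_sphere _ cont] by auto
  define a where "a = x0 \<bullet> (M *v x0)"
  define b where "b = x1 \<bullet> (M *v x1)"
  have "x0 \<noteq> 0" "x1 \<noteq> 0" using x0(1) x1(1) by auto
  then have "a > 0" "b > 0" unfolding a_def b_def using pos by auto
  moreover have "a * norm u ^ 2 \<le> u \<bullet> (M *v u) \<and> u \<bullet> (M *v u) \<le> b * norm u ^ 2" for u
  proof (cases "u = 0")
    case False
    define e where "e = (1 / norm u) *\<^sub>R u"
    have e: "e \<in> sphere 0 1" unfolding e_def using False by simp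
    have "u = norm u *\<^sub>R e" unfolding e_def using False by simp
    then have q: "u \<bullet> (M *v u) = norm u ^ 2 * (e \<bullet> (M *v e))"
      by (metis (no_types) inner_scaleR_left inner_scaleR_right matrix_vector_mult_scaleR
          power2_eq_square mult.assoc)
    have "a \<le> e \<bullet> (M *v e)" "e \<bullet> (M *v e) \<le> b" using x0(2) x1(2) e a_def b_def by auto
    then show ?thesis unfolding q by (auto intro!: mult_right_mono simp: mult.commute)
  qed simp
  ultimately show ?thesis using that by blast
qed

text \<open>The determinant cannot vanish along the segment of positive definite matrices
  from the identity to \<open>S\<close>, so it keeps the sign of \<open>det (mat 1) = 1\<close>.\<close>
lemma det_pos_if_pos_def:
  fixes S :: "real^'d^'d"
  assumes pd: "\<And>v. v \<noteq> 0 \<Longrightarrow> v \<bullet> (S *v v) > 0"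
  shows "det S > 0"
proof -
  define A where "A t = (1 - t) *\<^sub>R (mat 1 :: real^'d^'d) + t *\<^sub>R S" for t :: real
  have A_pos_def: "v \<bullet> (A t *v v) > 0" if "0 \<le> t" "t \<le> 1" "v \<noteq> 0" for t v
  proof -
    have "v \<bullet> (A t *v v) = (1 - t) * (v \<bullet> v) + t * (v \<bullet> (S *v v))"
      unfolding A_def by (simp add: matrix_vector_mult_add_rdistrib matrix_vector_mult_scaleR
          matrix_scaleR_vector_ac[symmetric] inner_add_right)
    moreover have "v \<bullet> v > 0" "v \<bullet> (S *v v) > 0" using pd \<open>v \<noteq> 0\<close> by auto
    ultimately show ?thesis using that
      by (cases "t = 0") (auto intro!: add_nonneg_pos)
  qed
  have cont: "continuous_on {0..1} (\<lambda>t. det (A t))"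
    unfolding det_def A_def by (intro continuous_intros)
  have nz: "det (A t) \<noteq> 0" if "0 \<le> t" "t \<le> 1" for t
    using pos_def_invertible[OF A_pos_def[OF that]] invertible_det_nz by blast
  show ?thesis
  proof (rule ccontr)
    assume "\<not> det S > 0"
    then have "det (A 1) \<le> 0" "0 \<le> det (A 0)" unfolding A_def by simp_all
    then obtain t where "0 \<le> t" "t \<le> 1" "det (A t) = 0"
      using IVT2'[of "\<lambda>t. det (A t)" 1 0 0] cont by auto
    then show False using nz by blast
  qed
qed

lemma gaussian_density_bounds:
  fixes S :: "real^'d^'d"
  assumes "nondegenerate_covariance S"
  obtains Z a b where "Z > 0" "a > 0" "b > 0"
    "\<And>v. exp (- b * norm (v - m) ^ 2) / Z \<le> gaussian_density m S v"
    "\<And>v. gaussian_density m S v \<le> exp (- a * norm (v - m) ^ 2) / Z"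
proof -
  have pd: "\<And>v. v \<noteq> 0 \<Longrightarrow> v \<bullet> (S *v v) > 0"
    using assms unfolding nondegenerate_covariance_def by blast
  obtain a b where ab: "a > 0" "b > 0"
    "\<And>u. a * norm u ^ 2 \<le> u \<bullet> (matrix_inv S *v u)" "\<And>u. u \<bullet> (matrix_inv S *v u) \<le> b * norm u ^ 2"
    using quadratic_form_bounds[of "matrix_inv S"] matrix_inv_pos_def[OF pd] by blast
  define Z where "Z = sqrt ((2 * pi) ^ CARD('d) * det S)"
  have Z: "Z > 0" unfolding Z_def using det_pos_if_pos_def[OF pd] by simp
  have g: "gaussian_density m S v = exp (- ((v - m) \<bullet> (matrix_inv S *v (v - m))) / 2) / Z" for v
    unfolding gaussian_density_def Z_def ..
  show ?thesis
  proof (rule that[of Z "a/2" "b/2"])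
    fix v
    show "exp (- (b/2) * norm (v - m) ^ 2) / Z \<le> gaussian_density m S v"
      "gaussian_density m S v \<le> exp (- (a/2) * norm (v - m) ^ 2) / Z"
      unfolding g using ab(3,4)[of "v - m"] Z by (auto intro!: divide_right_mono)
  qed (use Z ab in auto)
qed

lemma gaussian_density_continuous: "continuous_on UNIV (gaussian_density m S)"
proof -
  have inv: "continuous_on UNIV (\<lambda>x. matrix_inv S *v (x - m))"
    by (rule continuous_on_compose2[OF matrix_vector_mult_linear_continuous_on[of UNIV "matrix_inv S"]])
      (auto intro!: continuous_intros)
  have eq: "gaussian_density m S = (\<lambda>x. exp (- ((x - m) \<bullet> (matrix_inv S *v (x - m))) / 2)
      * (1 / sqrt ((2 * pi) ^ CARD('a) * det S)))"
    by (simp add: gaussian_density_def fun_eq_iff)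
  show ?thesis by (subst eq) (intro continuous_intros inv, simp)
qed

lemma gaussian_density_measurable[measurable]: "gaussian_density m S \<in> borel_measurable borel"
  using gaussian_density_continuous by (rule borel_measurable_continuous_onI)

section \<open>Integrals over \<open>R^d\<close>\<close>

lemma emeasure_lborel_ball_le:
  assumes "r \<ge> 0"
  shows "emeasure lborel (ball (0::real^'d) r) \<le> ennreal ((2 * r) ^ CARD('d))"
proof -
  define l :: "real^'d" where "l = (\<chi> i. - r)"
  define u :: "real^'d" where "u = (\<chi> i. r)"
  have "ball (0::real^'d) r \<subseteq> cbox l u"
  proof
    fix x :: "real^'d" assume "x \<in> ball 0 r"
    then have "\<bar>x $ i\<bar> \<le> r" for i using component_le_norm_cart[of x i] by simp
    then show "x \<in> cbox l u" unfolding l_def u_def mem_box_cart by (metis abs_le_iff minus_le_iff vec_lambda_beta)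
  qed
  then have "emeasure lborel (ball (0::real^'d) r) \<le> emeasure lborel (cbox l u)"
    by (intro emeasure_mono) auto
  also have "\<dots> = ennreal (\<Prod>b\<in>Basis. (u - l) \<bullet> b)"
    by (rule emeasure_lborel_cbox) (auto simp: l_def u_def Basis_vec_def inner_axis assms)
  also have "(\<Prod>b\<in>Basis. (u - l) \<bullet> b) = (\<Prod>b\<in>(Basis :: (real^'d) set). 2 * r)"
    by (rule prod.cong) (auto simp: l_def u_def Basis_vec_def inner_axis)
  finally show ?thesis by simp
qed

text \<open>Cover \<open>R^d\<close> by the balls of radius \<open>k + 1\<close>: the \<open>k\<close>-th one contributes
  \<open>O(k^d / k^(d+2))\<close>, a summable quantity.\<close>
lemma nn_integral_inverse_power_finite:
  "(\<integral>\<^sup>+ v. ennreal (1 / (1 + norm (v::real^'d)) ^ (CARD('d) + 2)) \<partial>lborel) < \<top>"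
proof -
  define N where "N = CARD('d)"
  define w where "w k = ennreal (1 / (1 + real k) ^ (N + 2))" for k :: nat
  define c where "c k = 2 ^ N * inverse ((1 + real k) ^ 2)" for k :: nat
  have "summable c"
    unfolding c_def using Polygamma_converges'[of "1::real" 2] by (intro summable_mult) simp
  have le_suminf: "f k \<le> suminf f" for f :: "nat \<Rightarrow> ennreal" and k
    using sum_le_suminf[of f "{k}"] by simp
  have pointwise: "ennreal (1 / (1 + norm v) ^ (N + 2)) \<le> (\<Sum>k. w k * indicator (ball 0 (1 + real k)) v)"
    for v :: "real^'d"
  proof -
    define k where "k = nat \<lfloor>norm v\<rfloor>"
    have "real k = of_int \<lfloor>norm v\<rfloor>" unfolding k_def by simp
    then have k: "real k \<le> norm v" "norm v < 1 + real k" using floor_correct[of "norm v"] by linarith+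
    have "ennreal (1 / (1 + norm v) ^ (N + 2)) \<le> w k * indicator (ball (0::real^'d) (1 + real k)) v"
      unfolding w_def using k by (auto simp del: power_Suc intro!: ennreal_leI divide_left_mono power_mono)
    also have "\<dots> \<le> (\<Sum>k. w k * indicator (ball 0 (1 + real k)) v)"
      by (rule le_suminf[of "\<lambda>k. w k * indicator (ball 0 (1 + real k)) v"])
    finally show ?thesis .
  qed
  have ball_term: "w k * emeasure lborel (ball (0::real^'d) (1 + real k)) \<le> ennreal (c k)" for k
  proof -
    have "w k * emeasure lborel (ball (0::real^'d) (1 + real k)) \<le> w k * ennreal ((2 * (1 + real k)) ^ N)"
      unfolding N_def by (intro mult_left_mono emeasure_lborel_ball_le) auto
    also have "\<dots> = ennreal (c k)"
    proof -
      have "1 / x ^ (N + 2) * (2 * x) ^ N = 2 ^ N * inverse (x ^ 2)" if "x > 0" for x :: real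
        using that by (simp add: power_add power_mult_distrib field_simps power2_eq_square)
      from this[of "1 + real k"] have "1 / (1 + real k) ^ (N + 2) * (2 * (1 + real k)) ^ N = c k"
        unfolding c_def by linarith
      then show ?thesis unfolding w_def by (simp add: ennreal_mult'[symmetric])
    qed
    finally show ?thesis .
  qed
  have "(\<integral>\<^sup>+ v. ennreal (1 / (1 + norm (v::real^'d)) ^ (N + 2)) \<partial>lborel)
      \<le> (\<integral>\<^sup>+ v. (\<Sum>k. w k * indicator (ball (0::real^'d) (1 + real k)) v) \<partial>lborel)"
    by (intro nn_integral_mono pointwise)
  also have "\<dots> = (\<Sum>k. \<integral>\<^sup>+ v. w k * indicator (ball (0::real^'d) (1 + real k)) v \<partial>lborel)"
  proof (rule nn_integral_suminf)
    fix k
    have [measurable]: "ball (0::real^'d) (1 + real k) \<in> sets borel" by simp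
    show "(\<lambda>v. w k * indicator (ball (0::real^'d) (1 + real k)) v) \<in> borel_measurable lborel"
      by measurable
  qed
  also have "\<dots> = (\<Sum>k. w k * emeasure lborel (ball (0::real^'d) (1 + real k)))"
    by (simp add: nn_integral_cmult_indicator)
  also have "\<dots> \<le> (\<Sum>k. ennreal (c k))"
    by (intro suminf_le ball_term summableI)
  also have "\<dots> < \<top>"
  proof -
    have "(\<Sum>k. ennreal (c k)) \<noteq> \<top>" by (rule ennreal_suminf_neq_top[OF \<open>summable c\<close>]) (simp add: c_def)
    then show ?thesis unfolding less_top .
  qed
  finally show ?thesis unfolding N_def .
qed

lemma neg_quadratic_le: "a > 0 \<Longrightarrow> - a * r^2 + c * r \<le> c^2 / (4 * a)" for a r c :: real
proof -
  assume a: "a > 0"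
  have "0 \<le> a * (r - c / (2 * a))^2" using a by simp
  also have "a * (r - c / (2 * a))^2 = a * r^2 - c * r + c^2 / (4 * a)"
    using a by (simp add: power2_eq_square field_simps)
  finally show ?thesis by linarith
qed

lemma exp_neg_quadratic_le_inverse_power:
  fixes a \<gamma> :: real and N :: nat
  assumes a: "a > 0"
  obtains B where "B > 0" "\<And>r. r \<ge> 0 \<Longrightarrow> exp (- a * r^2 + \<gamma> * r) \<le> B / (1 + r) ^ N"
proof -
  define M where "M = real (Suc N)"
  define B where "B = M ^ Suc N * exp ((\<gamma> + 1)^2 / (4 * a))"
  have "exp (- a * r^2 + \<gamma> * r) \<le> B / (1 + r) ^ N" if r: "r \<ge> 0" for r
  proof -
    have "(1 + r) ^ N \<le> (1 + r) ^ Suc N" using r by (intro power_increasing) auto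
    also have "\<dots> \<le> (M * (1 + r / M)) ^ Suc N"
      unfolding M_def using r by (intro power_mono) (auto simp: field_simps)
    also have "\<dots> = M ^ Suc N * (1 + r / M) ^ Suc N" by (simp add: power_mult_distrib)
    also have "\<dots> \<le> M ^ Suc N * exp r"
      unfolding M_def using r exp_ge_one_plus_x_over_n_power_n[of "Suc N" r]
      by (intro mult_left_mono) auto
    finally have "(1 + r) ^ N * exp (- a * r^2 + \<gamma> * r) \<le> M ^ Suc N * exp r * exp (- a * r^2 + \<gamma> * r)"
      by (intro mult_right_mono) auto
    also have "\<dots> = M ^ Suc N * exp (- a * r^2 + (\<gamma> + 1) * r)"
      by (simp add: exp_add[symmetric] algebra_simps)
    also have "\<dots> \<le> B"
      unfolding B_def using neg_quadratic_le[OF a, of r "\<gamma> + 1"] unfolding M_def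
      by (intro mult_left_mono) auto
    finally show ?thesis using r by (simp add: field_simps)
  qed
  moreover have "B > 0" unfolding B_def M_def by simp
  ultimately show ?thesis using that by blast
qed

lemma nn_integral_exp_neg_quadratic_finite:
  fixes a \<gamma> :: real
  assumes a: "a > 0"
  shows "(\<integral>\<^sup>+ v. ennreal (exp (- a * norm (v::real^'d)^2 + \<gamma> * norm v)) \<partial>lborel) < \<top>"
proof -
  obtain B where B: "B > 0" "\<And>r. r \<ge> 0 \<Longrightarrow> exp (- a * r^2 + \<gamma> * r) \<le> B / (1 + r) ^ (CARD('d) + 2)"
    using exp_neg_quadratic_le_inverse_power[OF a] by blast
  have "(\<integral>\<^sup>+ v. ennreal (exp (- a * norm (v::real^'d)^2 + \<gamma> * norm v)) \<partial>lborel)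
      \<le> (\<integral>\<^sup>+ v. ennreal B * ennreal (1 / (1 + norm (v::real^'d)) ^ (CARD('d) + 2)) \<partial>lborel)"
    using B by (intro nn_integral_mono) (simp add: ennreal_mult'[symmetric] ennreal_leI)
  also have "\<dots> = ennreal B * (\<integral>\<^sup>+ v. ennreal (1 / (1 + norm (v::real^'d)) ^ (CARD('d) + 2)) \<partial>lborel)"
    by (rule nn_integral_cmult) measurable
  also have "\<dots> < \<top>"
    using nn_integral_inverse_power_finite[where 'd='d] by (simp add: ennreal_mult_less_top)
  finally show ?thesis .
qed

lemma nn_integral_exp_neg_quadratic_tail:
  fixes a \<gamma> \<delta> :: real
  assumes a: "a > 0" and \<delta>: "\<delta> > 0"
  obtains L where
    "(\<integral>\<^sup>+ v. indicator {v. L < norm v} v * ennreal (exp (- a * norm (v::real^'d)^2 + \<gamma> * norm v)) \<partial>lborel)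
       < ennreal \<delta>"
proof -
  define N where "N = CARD('d)"
  obtain B where B: "B > 0" "\<And>r. r \<ge> 0 \<Longrightarrow> exp (- a * r^2 + \<gamma> * r) \<le> B / (1 + r) ^ (N + 3)"
    using exp_neg_quadratic_le_inverse_power[OF a] by blast
  define I where "I = enn2real (\<integral>\<^sup>+ v. ennreal (1 / (1 + norm (v::real^'d)) ^ (N + 2)) \<partial>lborel)"
  have I: "(\<integral>\<^sup>+ v. ennreal (1 / (1 + norm (v::real^'d)) ^ (N + 2)) \<partial>lborel) = ennreal I" "I \<ge> 0"
    unfolding I_def N_def using nn_integral_inverse_power_finite[where 'd='d] by (auto simp: less_top)
  define L where "L = B * (I + 1) / \<delta>"
  have L: "L \<ge> 0" unfolding L_def using B I \<delta> by simp
  have pointwise: "indicator {v. L < norm v} v * ennreal (exp (- a * norm v^2 + \<gamma> * norm v))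
      \<le> ennreal (B / (1 + L)) * ennreal (1 / (1 + norm (v::real^'d)) ^ (N + 2))" for v
  proof (cases "L < norm v")
    case True
    have "exp (- a * norm v^2 + \<gamma> * norm v) \<le> B / (1 + norm v) * (1 / (1 + norm v) ^ (N + 2))"
      using B(2)[of "norm v"] by (simp add: numeral_3_eq_3)
    also have "\<dots> \<le> B / (1 + L) * (1 / (1 + norm v) ^ (N + 2))"
      using True L B by (intro mult_right_mono divide_left_mono) auto
    finally show ?thesis using True B L by (simp add: ennreal_mult'[symmetric] ennreal_leI)
  qed simp
  have "(\<integral>\<^sup>+ v. indicator {v. L < norm v} v * ennreal (exp (- a * norm (v::real^'d)^2 + \<gamma> * norm v)) \<partial>lborel)
     \<le> (\<integral>\<^sup>+ v. ennreal (B / (1 + L)) * ennreal (1 / (1 + norm (v::real^'d)) ^ (N + 2)) \<partial>lborel)"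
    by (intro nn_integral_mono pointwise)
  also have "\<dots> = ennreal (B / (1 + L) * I)"
    using B L I by (subst nn_integral_cmult) (auto simp: ennreal_mult[symmetric] simp del: power_Suc)
  also have "\<dots> < ennreal \<delta>"
  proof (rule ennreal_lessI[OF \<delta>])
    have "B * I < B * (I + 1)" using B by simp
    also have "\<dots> = \<delta> * L" unfolding L_def using \<delta> by simp
    also have "\<dots> < \<delta> * (1 + L)" using \<delta> by simp
    finally have "B * I < \<delta> * (1 + L)" .
    then show "B / (1 + L) * I < \<delta>" using L by (simp add: field_simps)
  qed
  finally show ?thesis using that by blast
qed

lemma nn_integral_lborel_translate:
  fixes f :: "'a::euclidean_space \<Rightarrow> ennreal"
  assumes "f \<in> borel_measurable borel"
  shows "(\<integral>\<^sup>+ y. f (y - w) \<partial>lborel) = (\<integral>\<^sup>+ v. f v \<partial>lborel)"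
proof -
  have "(\<integral>\<^sup>+ v. f v \<partial>lborel) = (\<integral>\<^sup>+ v. f v \<partial>distr lborel borel ((+) (- w)))"
    by (simp add: lborel_distr_plus)
  also have "\<dots> = (\<integral>\<^sup>+ x. f (- w + x) \<partial>lborel)"
    using assms by (subst nn_integral_distr) auto
  finally show ?thesis by simp
qed

lemma exists_cball_positive_measure:
  assumes "E \<in> sets lborel" "emeasure lborel E > 0"
  obtains r where "r > 0" "emeasure lborel (E \<inter> cball (0::'a::euclidean_space) r) > 0"
proof (rule ccontr)
  assume "\<not> thesis"
  then have null: "emeasure lborel (E \<inter> cball (0::'a) (real (Suc n))) = 0" for n
    using that[of "real (Suc n)"] \<open>\<not> thesis\<close> not_gr_zero by fastforce
  have "E = (\<Union>n. E \<inter> cball (0::'a) (real (Suc n)))"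
  proof safe
    fix x assume "x \<in> E"
    obtain n where "norm x \<le> real n" using real_arch_simple by blast
    then have "x \<in> E \<inter> cball (0::'a) (real (Suc n))" using \<open>x \<in> E\<close> by simp
    then show "x \<in> (\<Union>n. E \<inter> cball (0::'a) (real (Suc n)))" by blast
  qed
  also have "emeasure lborel \<dots> = 0"
    using null assms(1) by (intro emeasure_UN_eq_0) auto
  finally show False using assms(2) by simp
qed

section \<open>The Feynman--Kac semigroup\<close>

locale fk_kernel =
  fixes F :: "real^'d \<Rightarrow> real^'d" and m :: "real^'d" and S :: "real^'d^'d"
    and E :: "(real^'d) set" and G :: "real^'d \<Rightarrow> real"
  assumes F_measurable[measurable]: "F \<in> borel_measurable borel"
    and E_measurable[measurable]: "E \<in> sets borel"
    and G_measurable: "G \<in> borel_measurable (restrict_space borel E)"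
begin

lemma G_indicator_measurable[measurable]: "(\<lambda>y. ennreal (G y) * indicator E y) \<in> borel_measurable borel"
proof -
  have "(\<lambda>x. G x * indicator E x) \<in> borel_measurable borel"
    using G_measurable borel_measurable_restrict_space_iff[of E borel G] by (simp add: mult.commute)
  then have "(\<lambda>x. ennreal (G x * indicator E x)) \<in> borel_measurable borel" by measurable
  moreover have "(\<lambda>x. ennreal (G x * indicator E x)) = (\<lambda>y. ennreal (G y) * indicator E y)"
    by (auto simp: fun_eq_iff indicator_def)
  ultimately show ?thesis by simp
qed

abbreviation "P \<equiv> fk_semigroup F m S E G"

definition kernel :: "real^'d \<Rightarrow> real^'d \<Rightarrow> ennreal" where
  "kernel x y = ennreal (gaussian_density m S (y - F x)) * (ennreal (G y) * indicator E y)"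

lemma P_Suc: "P (Suc n) f x = (\<integral>\<^sup>+ y. kernel x y * P n f y \<partial>lborel)"
  by (simp add: kernel_def mult.assoc)

lemma P_one: "P 1 f x = (\<integral>\<^sup>+ y. kernel x y * f y \<partial>lborel)"
  using P_Suc[of 0] by simp

lemma kernel_outside: "y \<notin> E \<Longrightarrow> kernel x y = 0"
  unfolding kernel_def by simp

lemma kernel_measurable[measurable]: "kernel x \<in> borel_measurable borel"
  unfolding kernel_def by measurable

lemma kernel_measurable_pair[measurable]:
  "(\<lambda>p. kernel (fst p) (snd p)) \<in> borel_measurable (lborel \<Otimes>\<^sub>M lborel)"
proof -
  have [measurable]: "(\<lambda>p. ennreal (G (snd p)) * indicator E (snd p)) \<in> borel_measurable (lborel \<Otimes>\<^sub>M lborel)"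
    using measurable_compose[OF measurable_snd G_indicator_measurable[folded measurable_lborel1]] by simp
  show ?thesis unfolding kernel_def by measurable
qed

lemma P_measurable[measurable]: "f \<in> borel_measurable borel \<Longrightarrow> P n f \<in> borel_measurable borel"
proof (induction n)
  case 0
  then show ?case by simp
next
  case (Suc n)
  have [measurable]: "P n f \<in> borel_measurable borel" by (rule Suc.IH[OF Suc.prems])
  have "(\<lambda>x. \<integral>\<^sup>+ y. kernel x y * P n f y \<partial>lborel) \<in> borel_measurable lborel"
    by (rule lborel.borel_measurable_nn_integral[unfolded case_prod_beta]) measurable
  then show ?case unfolding P_Suc[abs_def] by simp
qed

lemma P_mono: "(\<And>y. f y \<le> g y) \<Longrightarrow> P n f x \<le> P n g x"
proof (induction n arbitrary: x)
  case (Suc n)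
  show ?case unfolding P_Suc by (intro nn_integral_mono mult_left_mono Suc) auto
qed simp

lemma P_add: "P (a + b) f x = P a (P b f) x"
  by (induction a arbitrary: x) (simp_all add: P_Suc)

lemma P_cmult: "f \<in> borel_measurable borel \<Longrightarrow> P n (\<lambda>y. c * f y) x = c * P n f x"
proof (induction n arbitrary: x)
  case (Suc n)
  have [measurable]: "P n f \<in> borel_measurable borel" using Suc.prems by (rule P_measurable)
  have "P (Suc n) (\<lambda>y. c * f y) x = (\<integral>\<^sup>+ y. c * (kernel x y * P n f y) \<partial>lborel)"
    unfolding P_Suc Suc.IH[OF Suc.prems] by (simp add: ac_simps)
  also have "\<dots> = c * P (Suc n) f x" unfolding P_Suc by (rule nn_integral_cmult) measurable
  finally show ?case .
qed simp

lemma P_sub_eigen_iterate: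
  assumes [measurable]: "\<psi> \<in> borel_measurable borel" and "\<theta> \<ge> 0" "\<And>x. \<psi> x \<ge> 0"
    and sub: "\<And>x. ennreal (\<theta> * \<psi> x) \<le> P 1 (\<lambda>y. ennreal (\<psi> y)) x"
  shows "ennreal (\<theta> ^ n) * ennreal (\<psi> x) \<le> P n (\<lambda>y. ennreal (\<psi> y)) x"
proof (induction n arbitrary: x)
  case (Suc n)
  have "ennreal (\<theta> ^ Suc n) * ennreal (\<psi> x) = ennreal \<theta> * (ennreal (\<theta> ^ n) * ennreal (\<psi> x))"
    using \<open>\<theta> \<ge> 0\<close> by (simp add: ennreal_mult mult.assoc)
  also have "\<dots> \<le> ennreal \<theta> * P n (\<lambda>y. ennreal (\<psi> y)) x" by (intro mult_left_mono Suc.IH) simp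
  also have "\<dots> = P n (\<lambda>y. ennreal \<theta> * ennreal (\<psi> y)) x" by (rule P_cmult[symmetric]) measurable
  also have "\<dots> \<le> P n (P 1 (\<lambda>y. ennreal (\<psi> y))) x"
    using sub \<open>\<theta> \<ge> 0\<close> \<open>\<And>x. \<psi> x \<ge> 0\<close> by (intro P_mono) (simp add: ennreal_mult)
  also have "\<dots> = P (Suc n) (\<lambda>y. ennreal (\<psi> y)) x" using P_add[of n 1] by simp
  finally show ?case .
qed simp

text \<open>Up to normalisation \<open>\<psi> = 1\<^sub>K\<^sub>0 + 1\<^sub>K P\<^sub>1 1\<^sub>K\<^sub>0 / \<theta>0\<close>.  Its first summand alone gives
  \<open>P\<^sub>1 \<psi> \<ge> P\<^sub>1 1\<^sub>K\<^sub>0\<close> (up to the normalisation), and as \<open>P\<^sub>1 1\<^sub>K\<^sub>0 \<ge> \<theta>0\<close> on \<open>K0\<close>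
  this dominates \<open>\<theta>0/2 \<psi>\<close>.\<close>
lemma exists_sub_eigenfunction:
  assumes K0_sub: "K0 \<subseteq> K" and [measurable]: "K0 \<in> sets borel" "K \<in> sets borel"
    and "V \<ge> 0" "\<theta>0 > 0" "l > 0"
    and upper: "\<And>x. P 1 (indicator K0) x \<le> ennreal V"
    and lower_K0: "\<And>x. x \<in> K0 \<Longrightarrow> ennreal \<theta>0 \<le> P 1 (indicator K0) x"
    and lower_K: "\<And>x. x \<in> K \<Longrightarrow> ennreal l \<le> P 1 (indicator K0) x"
  obtains \<psi> c where "\<psi> \<in> borel_measurable borel" "c > 0"
    "\<And>x. 0 \<le> \<psi> x" "\<And>x. \<psi> x \<le> indicator K x" "\<And>x. x \<in> K \<Longrightarrow> c \<le> \<psi> x"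
    "\<And>x. ennreal (\<theta>0 / 2 * \<psi> x) \<le> P 1 (\<lambda>y. ennreal (\<psi> y)) x"
proof -
  define v where "v x = enn2real (P 1 (indicator K0) x)" for x
  have v_eq: "P 1 (indicator K0) x = ennreal (v x)" for x
  proof -
    have "P 1 (indicator K0) x < \<top>" using upper[of x] by (rule le_less_trans) simp
    then show ?thesis unfolding v_def by (simp add: ennreal_enn2real less_top)
  qed
  have v: "0 \<le> v x" "v x \<le> V" for x
    using upper[of x] \<open>V \<ge> 0\<close> unfolding v_eq by (auto simp: v_def)
  have v_K0: "\<theta>0 \<le> v x" if "x \<in> K0" for x
    using lower_K0[OF that] v(1)[of x] unfolding v_eq by simp
  have v_K: "l \<le> v x" if "x \<in> K" for x
    using lower_K[OF that] v(1)[of x] unfolding v_eq by simp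
  have [measurable]: "v \<in> borel_measurable borel" unfolding v_def[abs_def] by measurable
  define s where "s = 1 / (1 + V / \<theta>0)"
  have "1 + V / \<theta>0 > 0" using \<open>V \<ge> 0\<close> \<open>\<theta>0 > 0\<close> by (simp add: add_pos_nonneg)
  then have s: "s > 0" "s * (1 + V / \<theta>0) = 1" unfolding s_def by simp_all
  define \<psi> where "\<psi> x = s * (indicator K0 x + indicator K x * v x / \<theta>0)" for x
  have \<psi>_nonneg: "0 \<le> \<psi> x" for x unfolding \<psi>_def using s v \<open>\<theta>0 > 0\<close> by simp
  have \<psi>_le: "\<psi> x \<le> indicator K x" for x
  proof (cases "x \<in> K")
    case True
    have "indicator K0 x + v x / \<theta>0 \<le> 1 + V / \<theta>0"
      using v[of x] \<open>\<theta>0 > 0\<close> by (intro add_mono divide_right_mono) (auto simp: indicator_def)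
    then have "\<psi> x \<le> s * (1 + V / \<theta>0)" unfolding \<psi>_def using True s by (intro mult_left_mono) auto
    then show ?thesis using True s by simp
  next
    case False
    then show ?thesis using K0_sub unfolding \<psi>_def by (auto simp: indicator_def)
  qed
  have \<psi>_K: "s * (l / \<theta>0) \<le> \<psi> x" if "x \<in> K" for x
  proof -
    have "s * (l / \<theta>0) \<le> s * (v x / \<theta>0)"
      using v_K[OF that] s \<open>\<theta>0 > 0\<close> by (intro mult_left_mono divide_right_mono) auto
    also have "\<dots> \<le> \<psi> x" unfolding \<psi>_def using that s by (intro mult_left_mono) auto
    finally show ?thesis .
  qed
  have sub: "ennreal (\<theta>0 / 2 * \<psi> x) \<le> P 1 (\<lambda>y. ennreal (\<psi> y)) x" for x
  proof -
    have "\<theta>0 / 2 * \<psi> x \<le> s * v x"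
      using v[of x] v_K0[of x] s \<open>\<theta>0 > 0\<close> K0_sub unfolding \<psi>_def
      by (cases "x \<in> K0"; cases "x \<in> K") (auto simp: field_simps)
    then have "ennreal (\<theta>0 / 2 * \<psi> x) \<le> ennreal s * P 1 (indicator K0) x"
      using s v unfolding v_eq by (simp add: ennreal_mult[symmetric] ennreal_leI)
    also have "\<dots> = P 1 (\<lambda>y. ennreal s * indicator K0 y) x" by (rule P_cmult[symmetric]) measurable
    also have "\<dots> \<le> P 1 (\<lambda>y. ennreal (\<psi> y)) x"
    proof (rule P_mono)
      fix y
      have "s * indicator K0 y \<le> \<psi> y" unfolding \<psi>_def using s v[of y] \<open>\<theta>0 > 0\<close>
        by (intro mult_left_mono) (auto simp: indicator_def)
      then show "ennreal s * indicator K0 y \<le> ennreal (\<psi> y)"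
        by (cases "y \<in> K0") (auto intro: ennreal_leI)
    qed
    finally show ?thesis .
  qed
  have "\<psi> \<in> borel_measurable borel" unfolding \<psi>_def[abs_def] by measurable
  moreover have "s * (l / \<theta>0) > 0" using s \<open>l > 0\<close> \<open>\<theta>0 > 0\<close> by simp
  ultimately show ?thesis using that \<psi>_nonneg \<psi>_le \<psi>_K sub by blast
qed

end

section \<open>A criterion for Condition (G)\<close>

locale fk_criterion = fk_kernel F m S E G
  for F :: "real^'d \<Rightarrow> real^'d" and m S E G +
  fixes K :: "(real^'d) set" and \<psi>1 \<psi>2 :: "real^'d \<Rightarrow> real" and \<theta>1 \<theta>2 c\<psi> :: real
  assumes K_subset: "K \<subseteq> E" and K_measurable[measurable]: "K \<in> sets borel"
    and K_finite: "emeasure lborel K < \<infinity>" and K_positive: "emeasure lborel K > 0"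
    and \<psi>1_measurable[measurable]: "\<psi>1 \<in> borel_measurable borel"
    and \<psi>1_ge_1: "\<And>x. 1 \<le> \<psi>1 x" and \<psi>1_bounded_K: "bdd_above (\<psi>1 ` K)"
    and \<psi>2_measurable[measurable]: "\<psi>2 \<in> borel_measurable borel"
    and \<psi>2_nonneg: "\<And>x. 0 \<le> \<psi>2 x" and \<psi>2_le: "\<And>x. \<psi>2 x \<le> indicator K x * \<psi>1 x"
    and c\<psi>_pos: "c\<psi> > 0" and \<psi>2_lower: "\<And>x. x \<in> K \<Longrightarrow> c\<psi> * \<psi>1 x \<le> \<psi>2 x"
    and \<theta>1_pos: "0 < \<theta>1" and \<theta>1_less: "\<theta>1 < \<theta>2"
    and \<psi>2_sub_eigen: "\<And>x. ennreal (\<theta>2 * \<psi>2 x) \<le> P 1 (\<lambda>y. ennreal (\<psi>2 y)) x"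
    and lyapunov_outside: "\<And>x. x \<in> E \<Longrightarrow> x \<notin> K \<Longrightarrow> P 1 (\<lambda>y. ennreal (\<psi>1 y)) x \<le> ennreal (\<theta>1 * \<psi>1 x)"
    and lyapunov_K: "\<exists>c. \<forall>x\<in>K. P 1 (\<lambda>y. ennreal (\<psi>1 y)) x \<le> ennreal (c * \<psi>1 x)"
    and kernel_minorized: "\<exists>\<kappa>>0. \<forall>x\<in>K. \<forall>y\<in>K. ennreal \<kappa> \<le> kernel x y"
    and kernel_comparable: "\<And>\<epsilon>. \<epsilon> > 0 \<Longrightarrow> \<exists>A \<tau>. \<tau> \<in> borel_measurable borel \<and>
       (\<integral>\<^sup>+ z. \<tau> z \<partial>lborel) \<le> ennreal \<epsilon> \<and>
       (\<forall>y\<in>K. \<forall>y'\<in>K. \<forall>z. kernel y z \<le> ennreal A * kernel y' z \<or> kernel y z * ennreal (\<psi>1 z) \<le> \<tau> z)"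
begin

abbreviation "\<Psi>1 \<equiv> \<lambda>y. ennreal (\<psi>1 y)"

lemma \<psi>1_pos: "\<psi>1 x > 0"
  using \<psi>1_ge_1[of x] by simp

lemma \<theta>2_pos: "\<theta>2 > 0"
  using \<theta>1_pos \<theta>1_less by simp

definition growth :: "nat \<Rightarrow> real^'d \<Rightarrow> ennreal" where
  "growth n y = P n \<Psi>1 y / \<Psi>1 y"

lemma P_eq_growth: "P n \<Psi>1 y = growth n y * \<Psi>1 y"
  unfolding growth_def ennreal_divide_times using \<psi>1_pos[of y] by simp

lemma growth_le_P: "growth n y \<le> P n \<Psi>1 y"
  using mult_left_mono[of 1 "\<Psi>1 y" "growth n y"] \<psi>1_ge_1[of y] by (simp add: P_eq_growth)

lemma growth_le_cancel: "a * \<Psi>1 y \<le> growth n y * \<Psi>1 y \<Longrightarrow> a \<le> growth n y"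
  using ennreal_mult_le_mult_iff[of "\<Psi>1 y" a "growth n y"] \<psi>1_pos[of y] by (simp add: mult.commute)

lemma P_K_lower:
  assumes "y \<in> K"
  shows "ennreal (\<theta>2 ^ n * c\<psi>) * \<Psi>1 y \<le> P n (\<lambda>u. indicator K u * \<Psi>1 u) y"
proof -
  have "ennreal (\<theta>2 ^ n * c\<psi>) * \<Psi>1 y = ennreal (\<theta>2 ^ n) * ennreal (c\<psi> * \<psi>1 y)"
    using c\<psi>_pos \<theta>2_pos \<psi>1_pos[of y] by (simp add: ennreal_mult[symmetric] mult.assoc)
  also have "\<dots> \<le> ennreal (\<theta>2 ^ n) * ennreal (\<psi>2 y)"
    using \<psi>2_lower[OF assms] by (intro mult_left_mono ennreal_leI) auto
  also have "\<dots> \<le> P n (\<lambda>y. ennreal (\<psi>2 y)) y"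
    using \<theta>2_pos \<psi>2_nonneg \<psi>2_sub_eigen by (intro P_sub_eigen_iterate) auto
  also have "\<dots> \<le> P n (\<lambda>u. indicator K u * \<Psi>1 u) y"
  proof (rule P_mono)
    fix u
    have "ennreal (\<psi>2 u) \<le> ennreal (indicator K u * \<psi>1 u)" using \<psi>2_le by (rule ennreal_leI)
    then show "ennreal (\<psi>2 u) \<le> indicator K u * \<Psi>1 u" by (cases "u \<in> K") auto
  qed
  finally show ?thesis .
qed

lemma growth_lower:
  assumes "y \<in> K"
  shows "ennreal (\<theta>2 ^ n * c\<psi>) \<le> growth n y"
proof (rule growth_le_cancel)
  have "ennreal (\<theta>2 ^ n * c\<psi>) * \<Psi>1 y \<le> P n (\<lambda>u. indicator K u * \<Psi>1 u) y" by (rule P_K_lower[OF assms])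
  also have "\<dots> \<le> P n \<Psi>1 y" by (intro P_mono) (simp add: indicator_def)
  finally show "ennreal (\<theta>2 ^ n * c\<psi>) * \<Psi>1 y \<le> growth n y * \<Psi>1 y" by (simp add: P_eq_growth)
qed

definition sup_growth :: "nat \<Rightarrow> ennreal" where
  "sup_growth j = (SUP w\<in>K. growth j w)"

text \<open>Outside \<open>K\<close> the Lyapunov inequality contracts by \<open>\<theta>1\<close>, so \<open>P\<^sub>k \<psi>1 / \<psi>1\<close>
  is bounded on all of \<open>E\<close> by the following recursive envelope of the suprema over \<open>K\<close>.\<close>
primrec envelope :: "nat \<Rightarrow> ennreal" where
  "envelope 0 = 1"
| "envelope (Suc k) = max (sup_growth (Suc k)) (ennreal \<theta>1 * envelope k)"

lemma P_le_envelope: "z \<in> E \<Longrightarrow> P k \<Psi>1 z \<le> envelope k * \<Psi>1 z"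
proof (induction k arbitrary: z)
  case (Suc k)
  show ?case
  proof (cases "z \<in> K")
    case True
    have "P (Suc k) \<Psi>1 z \<le> sup_growth (Suc k) * \<Psi>1 z"
      unfolding P_eq_growth sup_growth_def using True by (intro mult_right_mono SUP_upper) auto
    also have "\<dots> \<le> envelope (Suc k) * \<Psi>1 z" by (intro mult_right_mono) auto
    finally show ?thesis .
  next
    case False
    have "P (Suc k) \<Psi>1 z \<le> (\<integral>\<^sup>+ y. envelope k * (kernel z y * \<Psi>1 y) \<partial>lborel)"
      unfolding P_Suc
    proof (intro nn_integral_mono)
      fix y
      show "kernel z y * P k \<Psi>1 y \<le> envelope k * (kernel z y * \<Psi>1 y)"
      proof (cases "y \<in> E")
        case True
        then have "kernel z y * P k \<Psi>1 y \<le> kernel z y * (envelope k * \<Psi>1 y)"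
          by (intro mult_left_mono Suc.IH) auto
        then show ?thesis by (simp add: ac_simps)
      qed (simp add: kernel_outside)
    qed
    also have "\<dots> = envelope k * P 1 \<Psi>1 z"
      unfolding P_one by (rule nn_integral_cmult) measurable
    also have "\<dots> \<le> envelope k * (ennreal \<theta>1 * \<Psi>1 z)"
      using lyapunov_outside[OF Suc.prems False] \<theta>1_pos
      by (intro mult_left_mono) (simp_all add: ennreal_mult')
    also have "\<dots> \<le> envelope (Suc k) * \<Psi>1 z"
      by (simp add: mult.assoc[symmetric] mult.commute[of "envelope k"] mult_right_mono)
    finally show ?thesis .
  qed
qed simp

lemma sup_growth_propagates:
  assumes c3: "c3 \<ge> 1" and comparable: "\<forall>y\<in>K. \<forall>y'\<in>K. growth j y \<le> ennreal c3 * growth j y'"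
    and "j \<le> n" and y': "y' \<in> K"
  shows "sup_growth j * ennreal (\<theta>2 ^ (n - j) * c\<psi> / c3) \<le> growth n y'"
proof (rule growth_le_cancel)
  define k where "k = n - j"
  have n: "n = k + j" unfolding k_def using \<open>j \<le> n\<close> by simp
  have inv: "ennreal (1 / c3) * ennreal c3 = 1" using c3 by (simp add: ennreal_mult[symmetric])
  have sup_le: "ennreal (1 / c3) * sup_growth j * \<Psi>1 u \<le> P j \<Psi>1 u" if "u \<in> K" for u
  proof -
    have "sup_growth j \<le> ennreal c3 * growth j u"
      unfolding sup_growth_def using comparable that by (intro SUP_least) auto
    then have "ennreal (1 / c3) * sup_growth j \<le> growth j u"
      using mult_left_mono[of _ _ "ennreal (1 / c3)"] inv by (fastforce simp: mult.assoc[symmetric])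
    then show ?thesis unfolding P_eq_growth by (rule mult_right_mono) simp
  qed
  have "ennreal (1 / c3) * sup_growth j * (ennreal (\<theta>2 ^ k * c\<psi>) * \<Psi>1 y')
      \<le> ennreal (1 / c3) * sup_growth j * P k (\<lambda>u. indicator K u * \<Psi>1 u) y'"
    using P_K_lower[OF y'] by (rule mult_left_mono) simp
  also have "\<dots> = P k (\<lambda>u. (ennreal (1 / c3) * sup_growth j) * (indicator K u * \<Psi>1 u)) y'"
    by (rule P_cmult[symmetric]) measurable
  also have "\<dots> \<le> P k (P j \<Psi>1) y'"
    using sup_le by (intro P_mono) (auto simp: indicator_def)
  also have "\<dots> = growth n y' * \<Psi>1 y'" unfolding n P_add[symmetric] P_eq_growth ..
  finally have "ennreal (1 / c3) * sup_growth j * ennreal (\<theta>2 ^ k * c\<psi>) * \<Psi>1 y' \<le> growth n y' * \<Psi>1 y'"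
    by (simp add: mult.assoc)
  moreover have "ennreal (1 / c3) * sup_growth j * ennreal (\<theta>2 ^ k * c\<psi>) = sup_growth j * ennreal (\<theta>2 ^ k * c\<psi> / c3)"
  proof -
    have "ennreal (1 / c3) * ennreal (\<theta>2 ^ k * c\<psi>) = ennreal (\<theta>2 ^ k * c\<psi> / c3)"
      using c3 c\<psi>_pos \<theta>2_pos by (simp add: ennreal_mult[symmetric])
    then show ?thesis by (metis mult.assoc mult.commute)
  qed
  ultimately show "sup_growth j * ennreal (\<theta>2 ^ (n - j) * c\<psi> / c3) * \<Psi>1 y' \<le> growth n y' * \<Psi>1 y'"
    unfolding k_def by simp
qed

lemma envelope_propagates:
  assumes c3: "c3 \<ge> 1" and comparable: "\<forall>j\<le>n. \<forall>y\<in>K. \<forall>y'\<in>K. growth j y \<le> ennreal c3 * growth j y'"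
    and y': "y' \<in> K" and "k \<le> n"
  shows "envelope k * ennreal (\<theta>2 ^ (Suc n - k) * c\<psi> / c3) \<le> growth (Suc n) y'"
  using \<open>k \<le> n\<close>
proof (induction k)
  case 0
  have "\<theta>2 ^ Suc n * c\<psi> / c3 \<le> \<theta>2 ^ Suc n * c\<psi>"
    using c3 c\<psi>_pos \<theta>2_pos by (simp add: divide_le_eq mult_le_cancel_left)
  then have "ennreal (\<theta>2 ^ Suc n * c\<psi> / c3) \<le> ennreal (\<theta>2 ^ Suc n * c\<psi>)" by (rule ennreal_leI)
  also have "\<dots> \<le> growth (Suc n) y'" by (rule growth_lower[OF y'])
  finally show ?case by simp
next
  case (Suc k)
  define X where "X = ennreal (\<theta>2 ^ (Suc n - Suc k) * c\<psi> / c3)"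
  have "sup_growth (Suc k) * X \<le> growth (Suc n) y'"
    unfolding X_def using Suc.prems comparable y' c3 by (intro sup_growth_propagates) auto
  moreover have "ennreal \<theta>1 * envelope k * X \<le> growth (Suc n) y'"
  proof -
    have "Suc n - k = Suc (Suc n - Suc k)" using Suc.prems by simp
    then have "\<theta>1 * (\<theta>2 ^ (Suc n - Suc k) * c\<psi> / c3) \<le> \<theta>2 ^ (Suc n - k) * c\<psi> / c3"
      using \<theta>1_less \<theta>1_pos c\<psi>_pos c3
      by (simp add: mult.assoc divide_right_mono mult_right_mono)
    then have "ennreal \<theta>1 * X \<le> ennreal (\<theta>2 ^ (Suc n - k) * c\<psi> / c3)"
      unfolding X_def ennreal_mult'[OF less_imp_le[OF \<theta>1_pos], symmetric] by (rule ennreal_leI)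
    then have "ennreal \<theta>1 * envelope k * X \<le> envelope k * ennreal (\<theta>2 ^ (Suc n - k) * c\<psi> / c3)"
      by (metis mult.assoc mult.commute mult_left_mono zero_le)
    also have "\<dots> \<le> growth (Suc n) y'" using Suc by simp
    finally show ?thesis .
  qed
  ultimately show ?case unfolding X_def[symmetric]
    by (cases "sup_growth (Suc k) \<le> ennreal \<theta>1 * envelope k") (simp_all add: max_def)
qed

lemma growth_0: "growth 0 y = 1"
  unfolding growth_def using \<psi>1_pos[of y] by simp

lemma P_Suc_split:
  assumes [measurable]: "\<tau> \<in> borel_measurable borel"
    and split: "\<And>z. kernel y z \<le> ennreal A * kernel y' z \<or> kernel y z * \<Psi>1 z \<le> \<tau> z"
  shows "P (Suc n) \<Psi>1 y \<le> ennreal A * P (Suc n) \<Psi>1 y' + envelope n * (\<integral>\<^sup>+ z. \<tau> z \<partial>lborel)"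
proof -
  have pointwise: "kernel y z * P n \<Psi>1 z \<le> ennreal A * (kernel y' z * P n \<Psi>1 z) + envelope n * \<tau> z" for z
  proof (cases "z \<in> E")
    case True
    from split consider "kernel y z \<le> ennreal A * kernel y' z" | "kernel y z * \<Psi>1 z \<le> \<tau> z" by blast
    then show ?thesis
    proof cases
      case 1
      then have "kernel y z * P n \<Psi>1 z \<le> ennreal A * (kernel y' z * P n \<Psi>1 z)"
        using mult_right_mono[OF 1, of "P n \<Psi>1 z"] by (simp add: mult.assoc)
      then show ?thesis by (rule add_increasing2[rotated]) simp
    next
      case 2
      have "kernel y z * P n \<Psi>1 z \<le> kernel y z * (envelope n * \<Psi>1 z)"
        using P_le_envelope[OF True] by (rule mult_left_mono) simp
      also have "\<dots> = envelope n * (kernel y z * \<Psi>1 z)" by (simp add: ac_simps)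
      also have "\<dots> \<le> envelope n * \<tau> z" using 2 by (rule mult_left_mono) simp
      finally show ?thesis by (rule add_increasing[OF zero_le])
    qed
  qed (simp add: kernel_outside)
  have "P (Suc n) \<Psi>1 y \<le> (\<integral>\<^sup>+ z. ennreal A * (kernel y' z * P n \<Psi>1 z) + envelope n * \<tau> z \<partial>lborel)"
    unfolding P_Suc by (intro nn_integral_mono pointwise)
  also have "\<dots> = ennreal A * P (Suc n) \<Psi>1 y' + envelope n * (\<integral>\<^sup>+ z. \<tau> z \<partial>lborel)"
    unfolding P_Suc by (subst nn_integral_add, measurable, simp add: nn_integral_cmult)
  finally show ?thesis .
qed

text \<open>Both terms of \<open>P_Suc_split\<close> are at most \<open>c3/2\<close> times the growth at \<open>y'\<close>: the first
  since \<open>\<psi>1\<close> is bounded on \<open>K\<close>, the second by \<open>envelope_propagates\<close>.\<close>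
lemma harnack_growth_step:
  assumes c3: "c3 \<ge> 1"
    and comparable: "\<forall>j\<le>n. \<forall>y\<in>K. \<forall>y'\<in>K. growth j y \<le> ennreal c3 * growth j y'"
    and \<tau>: "\<tau> \<in> borel_measurable borel" "(\<integral>\<^sup>+ z. \<tau> z \<partial>lborel) \<le> ennreal (\<theta>2 * c\<psi> / 2)"
    and split: "\<forall>y\<in>K. \<forall>y'\<in>K. \<forall>z. kernel y z \<le> ennreal A * kernel y' z \<or> kernel y z * \<Psi>1 z \<le> \<tau> z"
    and A_small: "\<forall>y\<in>K. A * \<psi>1 y \<le> c3 / 2"
    and y: "y \<in> K" and y': "y' \<in> K"
  shows "growth (Suc n) y \<le> ennreal c3 * growth (Suc n) y'"
proof -
  have "P (Suc n) \<Psi>1 y \<le> ennreal A * P (Suc n) \<Psi>1 y' + envelope n * (\<integral>\<^sup>+ z. \<tau> z \<partial>lborel)"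
    using split y y' by (intro P_Suc_split[OF \<tau>(1)]) blast
  also have "\<dots> \<le> ennreal A * P (Suc n) \<Psi>1 y' + envelope n * ennreal (\<theta>2 * c\<psi> / 2)"
    using \<tau>(2) by (intro add_left_mono mult_left_mono) auto
  also have "\<dots> \<le> ennreal (c3 / 2) * growth (Suc n) y' + ennreal (c3 / 2) * growth (Suc n) y'"
  proof (rule add_mono)
    have "ennreal A * P (Suc n) \<Psi>1 y' = ennreal A * (growth (Suc n) y' * \<Psi>1 y')"
      by (simp only: P_eq_growth)
    also have "\<dots> = ennreal (A * \<psi>1 y') * growth (Suc n) y'"
      using \<psi>1_pos[of y'] by (simp add: ennreal_mult'' ac_simps)
    also have "\<dots> \<le> ennreal (c3 / 2) * growth (Suc n) y'"
      using A_small y' by (intro mult_right_mono ennreal_leI) auto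
    finally show "ennreal A * P (Suc n) \<Psi>1 y' \<le> ennreal (c3 / 2) * growth (Suc n) y'" .
    have "ennreal (\<theta>2 * c\<psi> / 2) = ennreal (\<theta>2 ^ (Suc n - n) * c\<psi> / c3) * ennreal (c3 / 2)"
      using c3 \<theta>2_pos c\<psi>_pos by (simp add: ennreal_mult[symmetric])
    then have "envelope n * ennreal (\<theta>2 * c\<psi> / 2)
        = envelope n * ennreal (\<theta>2 ^ (Suc n - n) * c\<psi> / c3) * ennreal (c3 / 2)"
      by (simp add: mult.assoc)
    also have "\<dots> \<le> growth (Suc n) y' * ennreal (c3 / 2)"
      using envelope_propagates[OF c3 comparable y', of n] by (intro mult_right_mono) auto
    finally show "envelope n * ennreal (\<theta>2 * c\<psi> / 2) \<le> ennreal (c3 / 2) * growth (Suc n) y'"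
      by (simp add: mult.commute)
  qed
  also have "\<dots> = ennreal c3 * growth (Suc n) y'"
    using c3 by (simp add: distrib_right[symmetric] ennreal_plus[symmetric])
  finally show ?thesis using growth_le_P order_trans by blast
qed

lemma harnack_growth:
  obtains c3 where "c3 \<ge> 1" "\<And>n y y'. y \<in> K \<Longrightarrow> y' \<in> K \<Longrightarrow> growth n y \<le> ennreal c3 * growth n y'"
proof -
  obtain A \<tau> where \<tau>: "\<tau> \<in> borel_measurable borel" "(\<integral>\<^sup>+ z. \<tau> z \<partial>lborel) \<le> ennreal (\<theta>2 * c\<psi> / 2)"
    and split: "\<forall>y\<in>K. \<forall>y'\<in>K. \<forall>z. kernel y z \<le> ennreal A * kernel y' z \<or> kernel y z * \<Psi>1 z \<le> \<tau> z"
    using kernel_comparable[of "\<theta>2 * c\<psi> / 2"] \<theta>2_pos c\<psi>_pos by auto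
  obtain B where B: "\<And>y. y \<in> K \<Longrightarrow> \<psi>1 y \<le> B" using \<psi>1_bounded_K by (auto simp: bdd_above_def)
  define c3 where "c3 = max 1 (2 * (max A 0 * B))"
  have c3: "c3 \<ge> 1" unfolding c3_def by simp
  have A_small: "\<forall>y\<in>K. A * \<psi>1 y \<le> c3 / 2"
  proof
    fix y assume "y \<in> K"
    have "A * \<psi>1 y \<le> max A 0 * \<psi>1 y" using \<psi>1_pos[of y] by (intro mult_right_mono) auto
    also have "\<dots> \<le> max A 0 * B" using B[OF \<open>y \<in> K\<close>] by (intro mult_left_mono) auto
    finally show "A * \<psi>1 y \<le> c3 / 2" unfolding c3_def by linarith
  qed
  have comparable: "\<forall>j\<le>n. \<forall>y\<in>K. \<forall>y'\<in>K. growth j y \<le> ennreal c3 * growth j y'" for n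
  proof (induction n)
    case 0
    show ?case using c3 by (simp add: growth_0)
  next
    case (Suc n)
    then show ?case
      using harnack_growth_step[OF c3 Suc \<tau> split A_small] by (auto simp: le_Suc_eq)
  qed
  show ?thesis
  proof (rule that[OF c3])
    fix n y y' assume "y \<in> K" "y' \<in> K"
    then show "growth n y \<le> ennreal c3 * growth n y'" using comparable[of n] by blast
  qed
qed

lemma condition_G3:
  obtains c3 where "c3 > 0"
    "\<forall>n. (SUP y\<in>K. P n \<Psi>1 y / \<Psi>1 y) / (INF y\<in>K. P n \<Psi>1 y / \<Psi>1 y) \<le> ennreal c3"
proof -
  obtain c3 where c3: "c3 \<ge> 1" "\<And>n y y'. y \<in> K \<Longrightarrow> y' \<in> K \<Longrightarrow> growth n y \<le> ennreal c3 * growth n y'"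
    using harnack_growth by blast
  have "(SUP y\<in>K. growth n y) / (INF y\<in>K. growth n y) \<le> ennreal c3" for n
  proof -
    define I where "I = (INF y\<in>K. growth n y)"
    have sup_le: "(SUP y\<in>K. growth n y) \<le> ennreal c3 * I"
    proof -
      have "ennreal (1 / c3) * (SUP y\<in>K. growth n y) \<le> I"
        unfolding I_def
      proof (rule INF_greatest)
        fix y' assume "y' \<in> K"
        have "(SUP y\<in>K. growth n y) \<le> ennreal c3 * growth n y'"
          using c3(2) \<open>y' \<in> K\<close> by (intro SUP_least) auto
        then have "ennreal (1 / c3) * (SUP y\<in>K. growth n y) \<le> ennreal (1 / c3) * ennreal c3 * growth n y'"
          by (simp add: mult.assoc mult_left_mono)
        also have "\<dots> = growth n y'" using c3(1) by (simp add: ennreal_mult[symmetric])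
        finally show "ennreal (1 / c3) * (SUP y\<in>K. growth n y) \<le> growth n y'" .
      qed
      then have "ennreal c3 * (ennreal (1 / c3) * (SUP y\<in>K. growth n y)) \<le> ennreal c3 * I"
        by (rule mult_left_mono) simp
      then show ?thesis using c3(1) by (simp add: mult.assoc[symmetric] ennreal_mult[symmetric])
    qed
    have "0 < ennreal (\<theta>2 ^ n * c\<psi>)" using \<theta>2_pos c\<psi>_pos by simp
    also have "\<dots> \<le> I" unfolding I_def using growth_lower by (intro INF_greatest) auto
    finally have "I \<noteq> 0" by simp
    show ?thesis
    proof (cases "I = \<top>")
      case False
      have "(SUP y\<in>K. growth n y) / I \<le> ennreal c3 * I / I" using sup_le by (rule divide_right_mono_ennreal)
      also have "\<dots> = ennreal c3" using False \<open>I \<noteq> 0\<close> by (simp add: ennreal_mult_divide_eq)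
      finally show ?thesis unfolding I_def .
    qed (simp add: I_def)
  qed
  then show ?thesis using that[of c3] c3(1) unfolding growth_def by simp
qed

lemma P_one_indicator_minorized:
  assumes "A \<in> sets borel" "A \<subseteq> K" and \<kappa>: "\<And>y. y \<in> K \<Longrightarrow> ennreal \<kappa> \<le> kernel x y"
  shows "ennreal \<kappa> * emeasure lborel A \<le> P 1 (\<lambda>y. \<Psi>1 y * indicator A y) x"
proof -
  have "ennreal \<kappa> * emeasure lborel A = (\<integral>\<^sup>+ y. ennreal \<kappa> * indicator A y \<partial>lborel)"
    using assms(1) by (simp add: nn_integral_cmult_indicator)
  also have "\<dots> \<le> P 1 (\<lambda>y. \<Psi>1 y * indicator A y) x"
    unfolding P_one
  proof (intro nn_integral_mono)
    fix y
    show "ennreal \<kappa> * indicator A y \<le> kernel x y * (\<Psi>1 y * indicator A y)"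
    proof (cases "y \<in> A")
      case True
      then have "ennreal \<kappa> * 1 \<le> kernel x y * \<Psi>1 y"
        using \<kappa> assms(2) \<psi>1_ge_1[of y] by (intro mult_mono) auto
      then show ?thesis using True by simp
    qed simp
  qed
  finally show ?thesis .
qed

lemma condition_G1:
  obtains \<nu> c1 where "prob_space \<nu>" "sets \<nu> = sets (restrict_space (restrict_space lborel E) K)" "c1 > 0"
    "\<forall>x\<in>K. \<forall>A\<in>sets (restrict_space lborel E). A \<subseteq> K \<longrightarrow>
       ennreal c1 * emeasure \<nu> A * \<Psi>1 x \<le> P 1 (\<lambda>y. \<Psi>1 y * indicator A y) x"
proof -
  obtain \<kappa> where \<kappa>: "\<kappa> > 0" "\<And>x y. x \<in> K \<Longrightarrow> y \<in> K \<Longrightarrow> ennreal \<kappa> \<le> kernel x y"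
    using kernel_minorized by blast
  obtain B where B: "\<And>y. y \<in> K \<Longrightarrow> \<psi>1 y \<le> B" using \<psi>1_bounded_K by (auto simp: bdd_above_def)
  define mK where "mK = enn2real (emeasure lborel K)"
  have mK: "emeasure lborel K = ennreal mK" "mK > 0"
    unfolding mK_def using K_finite K_positive by (auto simp: less_top enn2real_positive_iff)
  then obtain x0 where "x0 \<in> K" by fastforce
  then have B_pos: "B > 0" using B[of x0] \<psi>1_pos[of x0] by linarith
  define N where "N = restrict_space lborel K"
  define \<nu> where "\<nu> = uniform_measure N K"
  have "prob_space \<nu>"
    unfolding \<nu>_def N_def using mK
    by (intro prob_space_uniform_measure) (simp_all add: emeasure_restrict_space sets_restrict_space_iff)
  moreover have "sets \<nu> = sets (restrict_space (restrict_space lborel E) K)"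
    using K_subset unfolding \<nu>_def N_def
    by (simp add: sets_restrict_space image_image Int_assoc[symmetric] Int_absorb2)
  moreover have "ennreal (\<kappa> * mK / B) * emeasure \<nu> A * \<Psi>1 x \<le> P 1 (\<lambda>y. \<Psi>1 y * indicator A y) x"
    if x: "x \<in> K" and A: "A \<in> sets (restrict_space lborel E)" "A \<subseteq> K" for x A
  proof -
    have A_lborel: "A \<in> sets lborel" using A(1) by (simp add: sets_restrict_space_iff)
    define mA where "mA = enn2real (emeasure lborel A)"
    have "emeasure lborel A \<le> emeasure lborel K" using A(2) by (intro emeasure_mono) auto
    then have mA: "emeasure lborel A = ennreal mA" "mA \<ge> 0"
      unfolding mA_def using K_finite by (auto simp: less_top top_unique)
    have "emeasure \<nu> A = emeasure N A / emeasure N K"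
      unfolding \<nu>_def N_def using A A_lborel by (simp add: sets_restrict_space_iff Int_absorb1)
    also have "\<dots> = ennreal (mA / mK)"
      unfolding N_def using A(2) A_lborel mK mA by (simp add: emeasure_restrict_space divide_ennreal)
    finally have \<nu>A: "emeasure \<nu> A = ennreal (mA / mK)" .
    have "\<kappa> * mK / B * (mA / mK) * \<psi>1 x = \<kappa> * mA * (\<psi>1 x / B)"
      using mK B_pos by (simp add: field_simps)
    also have "\<dots> \<le> \<kappa> * mA * 1" using B[OF x] B_pos \<kappa> mA by (intro mult_left_mono) auto
    finally have "ennreal (\<kappa> * mK / B) * emeasure \<nu> A * \<Psi>1 x \<le> ennreal \<kappa> * emeasure lborel A"
      unfolding \<nu>A mA(1) using \<kappa> mK mA B_pos \<psi>1_pos[of x]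
      by (simp add: ennreal_mult[symmetric] ennreal_leI)
    also have "\<dots> \<le> P 1 (\<lambda>y. \<Psi>1 y * indicator A y) x"
      using A_lborel A(2) \<kappa>(2)[OF x] by (intro P_one_indicator_minorized) auto
    finally show ?thesis .
  qed
  moreover have "\<kappa> * mK / B > 0" using \<kappa> mK B_pos by simp
  ultimately show ?thesis using that by blast
qed

lemma condition_G2_lyapunov:
  obtains c2 where "c2 > 0"
    "\<forall>x\<in>E. P 1 \<Psi>1 x \<le> ennreal (\<theta>1 * \<psi>1 x + c2 * indicator K x * \<psi>1 x)"
proof -
  obtain c where c: "\<And>x. x \<in> K \<Longrightarrow> P 1 \<Psi>1 x \<le> ennreal (c * \<psi>1 x)" using lyapunov_K by blast
  have "P 1 \<Psi>1 x \<le> ennreal (\<theta>1 * \<psi>1 x + (\<bar>c\<bar> + 1) * indicator K x * \<psi>1 x)" if "x \<in> E" for x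
  proof (cases "x \<in> K")
    case True
    have "c \<le> \<theta>1 + (\<bar>c\<bar> + 1)" using \<theta>1_pos by linarith
    then have "c * \<psi>1 x \<le> (\<theta>1 + (\<bar>c\<bar> + 1)) * \<psi>1 x"
      using \<psi>1_pos[of x] by (intro mult_right_mono) auto
    then have "ennreal (c * \<psi>1 x) \<le> ennreal (\<theta>1 * \<psi>1 x + (\<bar>c\<bar> + 1) * indicator K x * \<psi>1 x)"
      using True by (intro ennreal_leI) (simp add: algebra_simps)
    with c[OF True] show ?thesis by (rule order.trans)
  next
    case False
    then show ?thesis using lyapunov_outside[OF that] by simp
  qed
  then show ?thesis using that[of "\<bar>c\<bar> + 1"] by auto
qed

lemma P_K_positive:
  assumes "x \<in> K"
  shows "P n (\<lambda>y. indicator K y * \<Psi>1 y) x > 0"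
proof -
  have "0 < ennreal (\<theta>2 ^ n * c\<psi>) * \<Psi>1 x"
    using \<theta>2_pos c\<psi>_pos \<psi>1_pos[of x] by (simp add: ennreal_zero_less_mult_iff)
  then show ?thesis using P_K_lower[OF assms] by (rule less_le_trans)
qed

theorem condition_G: "condition_G (restrict_space lborel E) P"
proof -
  obtain \<nu> c1 where G1: "prob_space \<nu>" "sets \<nu> = sets (restrict_space (restrict_space lborel E) K)" "c1 > 0"
    "\<forall>x\<in>K. \<forall>A\<in>sets (restrict_space lborel E). A \<subseteq> K \<longrightarrow>
       ennreal c1 * emeasure \<nu> A * \<Psi>1 x \<le> P 1 (\<lambda>y. \<Psi>1 y * indicator A y) x"
    using condition_G1 by blast
  obtain c2 where G2: "c2 > 0"
    "\<forall>x\<in>E. P 1 \<Psi>1 x \<le> ennreal (\<theta>1 * \<psi>1 x + c2 * indicator K x * \<psi>1 x)"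
    using condition_G2_lyapunov by blast
  obtain c3 where G3: "c3 > 0"
    "\<forall>n. (SUP y\<in>K. P n \<Psi>1 y / \<Psi>1 y) / (INF y\<in>K. P n \<Psi>1 y / \<Psi>1 y) \<le> ennreal c3"
    using condition_G3 by blast
  have "K \<noteq> {}" using K_positive by auto
  then have "c\<psi> \<le> (INF x\<in>K. \<psi>2 x / \<psi>1 x)"
    using \<psi>2_lower \<psi>1_pos by (intro cINF_greatest) (auto simp: field_simps)
  then have INF_pos: "(INF x\<in>K. \<psi>2 x / \<psi>1 x) > 0" using c\<psi>_pos by linarith
  have ratio: "\<forall>x\<in>E. \<psi>2 x / \<psi>1 x \<le> 1"
  proof
    fix x
    have "\<psi>2 x \<le> \<psi>1 x" using \<psi>2_le[of x] \<psi>1_pos[of x] by (cases "x \<in> K") auto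
    then show "\<psi>2 x / \<psi>1 x \<le> 1" using \<psi>1_pos[of x] by simp
  qed
  have K: "K \<in> sets (restrict_space lborel E)"
    using K_subset by (simp add: sets_restrict_space_iff)
  have measurable: "\<psi>1 \<in> borel_measurable (restrict_space lborel E)"
    "\<psi>2 \<in> borel_measurable (restrict_space lborel E)"
    by (simp_all add: measurable_restrict_space1)
  have sub_eigen: "\<forall>x\<in>E. P 1 (\<lambda>y. ennreal (\<psi>2 y)) x \<ge> ennreal (\<theta>2 * \<psi>2 x)"
    using \<psi>2_sub_eigen by blast
  have G4: "\<forall>x\<in>K. \<exists>n4. \<forall>n\<ge>n4. P n (\<lambda>y. indicator K y * ennreal (\<psi>1 y)) x > 0"
    using P_K_positive by blast
  have signs: "\<forall>x\<in>E. \<psi>1 x > 0" "\<forall>x\<in>E. \<psi>2 x \<ge> 0" "(1::nat) \<ge> 1"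
    using \<psi>1_pos \<psi>2_nonneg by auto
  show ?thesis
    unfolding condition_G_def space_restrict_space space_lborel space_borel Int_UNIV_right
    by (rule exI[of _ \<theta>1], rule exI[of _ \<theta>2], rule exI[of _ c1], rule exI[of _ c2], rule exI[of _ c3],
        rule exI[of _ 1], rule exI[of _ \<psi>1], rule exI[of _ \<psi>2], rule exI[of _ K], rule exI[of _ \<nu>],
        intro conjI)
      (fact \<theta>1_pos \<theta>2_pos \<theta>1_less G1 G2 G3 G4 signs INF_pos ratio K measurable sub_eigen)+
qed

end

section \<open>Gaussian perturbations of a dynamical system\<close>

lemma locally_bounded_on_cball:
  fixes f :: "'a::euclidean_space \<Rightarrow> 'b::real_normed_vector"
  assumes "locally_bounded_on S f"
  obtains B where "\<And>x. x \<in> S \<Longrightarrow> norm x \<le> r \<Longrightarrow> norm (f x) \<le> B"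
proof -
  have "\<forall>x. \<exists>e. e > 0 \<and> (\<exists>B. \<forall>y\<in>ball x e \<inter> S. norm (f y) \<le> B)"
    using assms unfolding locally_bounded_on_def bounded_iff by fast
  then obtain e Bf where e: "\<And>x. e x > 0" and Bf: "\<And>x y. y \<in> ball x (e x) \<inter> S \<Longrightarrow> norm (f y) \<le> Bf x"
    by metis
  have cover: "cball 0 r \<subseteq> (\<Union>x\<in>cball 0 r. ball x (e x))" using e centre_in_ball by blast
  obtain T where T: "finite T" "cball 0 r \<subseteq> (\<Union>x\<in>T. ball x (e x))"
  proof (rule compactE_image[OF compact_cball[of 0 r] _ cover])
    show "open (ball x (e x))" for x by simp
  qed
  have "norm (f y) \<le> Max (Bf ` T)" if "y \<in> S" "norm y \<le> r" for y
  proof -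
    have "y \<in> cball 0 r" using that by simp
    then obtain x where x: "x \<in> T" "y \<in> ball x (e x)" using T(2) by blast
    then have "norm (f y) \<le> Bf x" using Bf that by blast
    also have "Bf x \<le> Max (Bf ` T)" using T(1) x(1) by (intro Max_ge) auto
    finally show ?thesis .
  qed
  then show ?thesis using that by blast
qed

locale gaussian_fk = fk_kernel F m S E G
  for F :: "real^'d \<Rightarrow> real^'d" and m S E G +
  fixes p C Z a b :: real
  assumes F_locally_bounded: "locally_bounded_on UNIV F"
    and E_positive: "emeasure lborel E > 0"
    and G_pos: "\<And>x. x \<in> E \<Longrightarrow> G x > 0"
    and inverse_G_locally_bounded: "locally_bounded_on E (\<lambda>x. 1 / G x)"
    and C_pos: "C > 0" and G_growth: "\<And>x. x \<in> E \<Longrightarrow> G x \<le> C * exp (norm x)"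
    and p_gt_1: "p > 1" and drift: "filterlim (\<lambda>x. norm x - p * norm (F x)) at_top at_infinity"
    and Z_pos: "Z > 0" and a_pos: "a > 0" and b_pos: "b > 0"
    and density_lower: "\<And>v. exp (- b * norm (v - m) ^ 2) / Z \<le> gaussian_density m S v"
    and density_upper: "\<And>v. gaussian_density m S v \<le> exp (- a * norm (v - m) ^ 2) / Z"
begin

lemma F_bounded:
  obtains M where "M \<ge> 0" "\<And>x. norm x \<le> r \<Longrightarrow> norm (F x) \<le> M"
proof -
  obtain M where M: "\<And>x. x \<in> UNIV \<Longrightarrow> norm x \<le> r \<Longrightarrow> norm (F x) \<le> M"
    using locally_bounded_on_cball[OF F_locally_bounded, where r=r] by metis
  show ?thesis
  proof (rule that[of "max M 0"])
    fix x :: "real^'d" assume "norm x \<le> r"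
    then show "norm (F x) \<le> max M 0" using M[of x] by simp
  qed simp
qed

lemma G_lower:
  obtains g where "g > 0" "\<And>x. x \<in> E \<Longrightarrow> norm x \<le> r \<Longrightarrow> g \<le> G x"
proof -
  obtain B where B: "\<And>x. x \<in> E \<Longrightarrow> norm x \<le> r \<Longrightarrow> norm (1 / G x) \<le> B"
    using locally_bounded_on_cball[OF inverse_G_locally_bounded] by blast
  have "1 / max B 1 \<le> G x" if "x \<in> E" "norm x \<le> r" for x
  proof -
    have "1 / G x \<le> max B 1" using B[OF that] G_pos[OF that(1)] by simp
    then have "1 \<le> max B 1 * G x" using G_pos[OF that(1)] by (simp add: divide_le_eq)
    then show ?thesis by (simp add: divide_le_eq mult.commute)
  qed
  then show ?thesis using that[of "1 / max B 1"] by simp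
qed

lemma drift_bounded_below:
  obtains B where "\<And>x. B \<le> norm x - p * norm (F x)"
proof -
  obtain r where r: "\<And>x. r \<le> norm x \<Longrightarrow> 0 \<le> norm x - p * norm (F x)"
    using drift unfolding filterlim_at_top eventually_at_infinity by blast
  obtain M where M: "M \<ge> 0" "\<And>x. norm x \<le> r \<Longrightarrow> norm (F x) \<le> M" using F_bounded by blast
  have "- p * M \<le> norm x - p * norm (F x)" for x
  proof (cases "r \<le> norm x")
    case True
    moreover have "0 \<le> p * M" using M p_gt_1 by simp
    ultimately show ?thesis using r[of x] by linarith
  next
    case False
    then have "p * norm (F x) \<le> p * M" using M p_gt_1 by simp
    then show ?thesis using norm_ge_zero[of x] by linarith
  qed
  then show ?thesis using that by blast
qed

lemma density_nonneg: "gaussian_density m S v \<ge> 0"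
proof -
  have "0 < exp (- b * norm (v - m) ^ 2) / Z" using Z_pos by simp
  then show ?thesis using density_lower[of v] by linarith
qed

lemma density_le: "gaussian_density m S v \<le> 1 / Z"
proof -
  have "exp (- a * norm (v - m) ^ 2) \<le> 1" using a_pos by simp
  then have "exp (- a * norm (v - m) ^ 2) / Z \<le> 1 / Z" using Z_pos by (intro divide_right_mono) auto
  then show ?thesis using density_upper[of v] by linarith
qed

lemma density_upper_shifted:
  assumes "norm w \<le> M"
  shows "gaussian_density m S (z - w) \<le> exp (a * (M + norm m)^2) / Z * exp (- (a/2) * norm z ^ 2)"
proof -
  have "norm z ^ 2 \<le> 2 * norm (z - (w + m)) ^ 2 + 2 * (M + norm m) ^ 2"
  proof -
    have "norm z \<le> norm (z - (w + m)) + (M + norm m)"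
      using norm_triangle_ineq[of "z - (w + m)" "w + m"] norm_triangle_ineq[of w m] assms by simp
    then have "norm z ^ 2 \<le> (norm (z - (w + m)) + (M + norm m)) ^ 2" by (simp add: power_mono)
    then show ?thesis using sum_squares_bound[of "norm (z - (w + m))" "M + norm m"]
      by (simp add: power2_eq_square algebra_simps)
  qed
  from mult_left_mono[OF this, of "a / 2"]
  have "- a * norm (z - (w + m)) ^ 2 \<le> a * (M + norm m)^2 + (- (a/2) * norm z ^ 2)"
    using a_pos by (simp add: algebra_simps)
  then have "exp (- a * norm (z - w - m) ^ 2) / Z \<le> exp (a * (M + norm m)^2) / Z * exp (- (a/2) * norm z ^ 2)"
    using Z_pos by (simp add: exp_add[symmetric] divide_right_mono diff_diff_eq)
  then show ?thesis using density_upper[of "z - w"] by simp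
qed

lemma density_lower_shifted:
  assumes "norm w \<le> M"
  shows "exp (- 2 * b * (M + norm m)^2) / Z * exp (- (2 * b) * norm z ^ 2) \<le> gaussian_density m S (z - w)"
proof -
  have "norm (z - (w + m)) ^ 2 \<le> 2 * norm z ^ 2 + 2 * (M + norm m) ^ 2"
  proof -
    have "norm (z - (w + m)) \<le> norm z + (M + norm m)"
      using norm_triangle_ineq4[of z "w + m"] norm_triangle_ineq[of w m] assms by simp
    then have "norm (z - (w + m)) ^ 2 \<le> (norm z + (M + norm m)) ^ 2" by (simp add: power_mono)
    then show ?thesis using sum_squares_bound[of "norm z" "M + norm m"]
      by (simp add: power2_eq_square algebra_simps)
  qed
  from mult_left_mono[OF this, of b]
  have "- 2 * b * (M + norm m)^2 + (- (2 * b) * norm z ^ 2) \<le> - b * norm (z - (w + m)) ^ 2"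
    using b_pos by (simp add: algebra_simps)
  then have "exp (- 2 * b * (M + norm m)^2) / Z * exp (- (2 * b) * norm z ^ 2) \<le> exp (- b * norm (z - w - m) ^ 2) / Z"
    using Z_pos by (simp add: exp_add[symmetric] divide_right_mono diff_diff_eq)
  then show ?thesis using density_lower[of "z - w"] by simp
qed

lemma kernel_lower:
  assumes y: "y \<in> E" "norm y \<le> r" and Fx: "norm (F x) \<le> M" and g: "0 \<le> g" "g \<le> G y"
  shows "ennreal (exp (- b * (r + M + norm m)^2) / Z * g) \<le> kernel x y"
proof -
  have "norm (y - F x - m) \<le> r + M + norm m"
    using y Fx norm_triangle_ineq4[of "y - F x" m] norm_triangle_ineq4[of y "F x"] by linarith
  then have "exp (- b * (r + M + norm m)^2) \<le> exp (- b * norm (y - F x - m) ^ 2)"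
    using b_pos by (simp add: power_mono)
  then have "exp (- b * (r + M + norm m)^2) / Z \<le> exp (- b * norm (y - F x - m) ^ 2) / Z"
    using Z_pos by (intro divide_right_mono) auto
  then have "exp (- b * (r + M + norm m)^2) / Z \<le> gaussian_density m S (y - F x)"
    using density_lower[of "y - F x"] by linarith
  then have "exp (- b * (r + M + norm m)^2) / Z * g \<le> gaussian_density m S (y - F x) * G y"
    using g density_nonneg by (intro mult_mono) auto
  then show ?thesis unfolding kernel_def using y g density_nonneg
    by (simp add: ennreal_mult[symmetric] ennreal_leI)
qed

lemma kernel_exp_norm_le:
  fixes x y :: "real^'d"
  assumes "\<beta> \<ge> 0"
  defines "w \<equiv> F x + m"
  shows "kernel x y * ennreal (exp (\<beta> * norm y))
    \<le> ennreal (C / Z * exp ((1 + \<beta>) * norm w))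
      * ennreal (exp (- a * norm (y - w) ^ 2 + (1 + \<beta>) * norm (y - w)))"
proof (cases "y \<in> E")
  case True
  have "norm y \<le> norm (y - w) + norm w" using norm_triangle_ineq[of "y - w" w] by simp
  then have \<gamma>y: "(1 + \<beta>) * norm y \<le> (1 + \<beta>) * (norm (y - w) + norm w)"
    using assms(1) by (intro mult_left_mono) auto
  have "gaussian_density m S (y - F x) * G y * exp (\<beta> * norm y)
      \<le> exp (- a * norm (y - w) ^ 2) / Z * (C * exp (norm y)) * exp (\<beta> * norm y)"
    using density_upper[of "y - F x"] G_pos[OF True] G_growth[OF True] density_nonneg Z_pos C_pos
    unfolding w_def by (intro mult_mono) (auto simp: diff_diff_eq)
  also have "\<dots> = C / Z * exp (- a * norm (y - w) ^ 2 + (1 + \<beta>) * norm y)"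
    by (simp add: exp_add[symmetric] algebra_simps)
  also have "\<dots> \<le> C / Z * exp (- a * norm (y - w) ^ 2 + (1 + \<beta>) * (norm (y - w) + norm w))"
    using \<gamma>y C_pos Z_pos by (intro mult_left_mono) auto
  also have "\<dots> = C / Z * exp ((1 + \<beta>) * norm w) * exp (- a * norm (y - w) ^ 2 + (1 + \<beta>) * norm (y - w))"
    by (simp add: exp_add[symmetric] algebra_simps)
  finally show ?thesis
    unfolding kernel_def using True G_pos[OF True] density_nonneg C_pos Z_pos
    by (simp add: ennreal_mult[symmetric] ennreal_leI)
qed (simp add: kernel_outside)

lemma P_one_exp_norm_le:
  assumes "\<beta> \<ge> 0"
  obtains c where "c > 0"
    "\<And>x. P 1 (\<lambda>y. ennreal (exp (\<beta> * norm y))) x \<le> ennreal (c * exp ((1 + \<beta>) * norm (F x)))"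
proof -
  define f where "f v = ennreal (exp (- a * norm v ^ 2 + (1 + \<beta>) * norm v))" for v :: "real^'d"
  have [measurable]: "f \<in> borel_measurable borel" unfolding f_def[abs_def] by measurable
  define J where "J = enn2real (\<integral>\<^sup>+ v. f v \<partial>lborel)"
  have "(\<integral>\<^sup>+ v. f v \<partial>lborel) < \<top>"
    unfolding f_def by (rule nn_integral_exp_neg_quadratic_finite[OF a_pos])
  then have J: "(\<integral>\<^sup>+ v. f v \<partial>lborel) = ennreal J" "J \<ge> 0" unfolding J_def by simp_all
  define c where "c = C / Z * (J + 1) * exp ((1 + \<beta>) * norm m)"
  have "P 1 (\<lambda>y. ennreal (exp (\<beta> * norm y))) x \<le> ennreal (c * exp ((1 + \<beta>) * norm (F x)))" for x
  proof -
    define w where "w = F x + m"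
    define c' where "c' = C / Z * exp ((1 + \<beta>) * norm w)"
    have c': "c' \<ge> 0" unfolding c'_def using C_pos Z_pos by simp
    have "P 1 (\<lambda>y. ennreal (exp (\<beta> * norm y))) x \<le> (\<integral>\<^sup>+ y. ennreal c' * f (y - w) \<partial>lborel)"
      unfolding P_one c'_def f_def w_def using kernel_exp_norm_le[OF assms] by (intro nn_integral_mono)
    also have "\<dots> = ennreal (c' * J)"
      using nn_integral_lborel_translate[of f w] J c' by (simp add: nn_integral_cmult ennreal_mult)
    also have "\<dots> \<le> ennreal (c * exp ((1 + \<beta>) * norm (F x)))"
    proof (rule ennreal_leI)
      have "norm w \<le> norm (F x) + norm m" unfolding w_def by (rule norm_triangle_ineq)
      then have "c' * J \<le> C / Z * exp ((1 + \<beta>) * (norm (F x) + norm m)) * (J + 1)"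
        unfolding c'_def using C_pos Z_pos J assms by (intro mult_mono) auto
      also have "\<dots> = c * exp ((1 + \<beta>) * norm (F x))"
        unfolding c_def by (simp add: exp_add[symmetric] algebra_simps)
      finally show "c' * J \<le> c * exp ((1 + \<beta>) * norm (F x))" .
    qed
    finally show ?thesis .
  qed
  moreover have "c > 0" unfolding c_def using C_pos Z_pos J by simp
  ultimately show ?thesis using that by blast
qed

definition \<beta> :: real where "\<beta> = 1 / (p - 1)"

definition \<psi>1 :: "real^'d \<Rightarrow> real" where "\<psi>1 y = exp (\<beta> * norm y)"

lemma \<beta>_pos: "\<beta> > 0"
  unfolding \<beta>_def using p_gt_1 by simp

lemma \<psi>1_ge_1: "1 \<le> \<psi>1 y"
  unfolding \<psi>1_def using \<beta>_pos by simp

lemma \<psi>1_measurable[measurable]: "\<psi>1 \<in> borel_measurable borel"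
  unfolding \<psi>1_def[abs_def] by measurable

text \<open>\<open>\<beta> = 1/(p - 1)\<close> is the exponent with \<open>1 + \<beta> = \<beta> p\<close>, which turns the bound
  \<open>exp ((1 + \<beta>) |F x|)\<close> of \<open>P_one_exp_norm_le\<close> into the drift.\<close>
lemma lyapunov_drift:
  obtains c where "c > 0"
    "\<And>x. P 1 (\<lambda>y. ennreal (\<psi>1 y)) x \<le> ennreal (c * exp (- \<beta> * (norm x - p * norm (F x))) * \<psi>1 x)"
proof -
  obtain c where c: "c > 0"
    "\<And>x. P 1 (\<lambda>y. ennreal (exp (\<beta> * norm y))) x \<le> ennreal (c * exp ((1 + \<beta>) * norm (F x)))"
    using P_one_exp_norm_le[of \<beta>] \<beta>_pos by auto
  have "1 + \<beta> = \<beta> * p" unfolding \<beta>_def using p_gt_1 by (simp add: field_simps)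
  then have "(1 + \<beta>) * norm (F x) = - \<beta> * (norm x - p * norm (F x)) + \<beta> * norm x" for x
    by (simp add: algebra_simps)
  then have "c * exp ((1 + \<beta>) * norm (F x)) = c * exp (- \<beta> * (norm x - p * norm (F x))) * \<psi>1 x" for x
    unfolding \<psi>1_def by (simp only: exp_add mult.assoc)
  then show ?thesis using that c unfolding \<psi>1_def by metis
qed

lemma lyapunov_far:
  assumes "\<theta> > 0"
  obtains R where "\<And>x. R \<le> norm x \<Longrightarrow> P 1 (\<lambda>y. ennreal (\<psi>1 y)) x \<le> ennreal (\<theta> * \<psi>1 x)"
proof -
  obtain c where c: "c > 0"
    "\<And>x. P 1 (\<lambda>y. ennreal (\<psi>1 y)) x \<le> ennreal (c * exp (- \<beta> * (norm x - p * norm (F x))) * \<psi>1 x)"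
    using lyapunov_drift by blast
  obtain R where R: "\<And>x. R \<le> norm x \<Longrightarrow> ln (c / \<theta>) / \<beta> \<le> norm x - p * norm (F x)"
    using drift unfolding filterlim_at_top eventually_at_infinity by blast
  have "c * exp (- \<beta> * (norm x - p * norm (F x))) \<le> \<theta>" if "R \<le> norm x" for x
  proof -
    have "ln (c / \<theta>) \<le> \<beta> * (norm x - p * norm (F x))" using R[OF that] \<beta>_pos by (simp add: field_simps)
    then have "exp (- \<beta> * (norm x - p * norm (F x))) \<le> exp (- ln (c / \<theta>))" by simp
    also have "\<dots> = \<theta> / c" using c(1) \<open>\<theta> > 0\<close> by (simp add: exp_minus exp_ln)
    finally show ?thesis using c(1) by (simp add: field_simps)
  qed
  then have "P 1 (\<lambda>y. ennreal (\<psi>1 y)) x \<le> ennreal (\<theta> * \<psi>1 x)" if "R \<le> norm x" for x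
    using c(2)[of x] \<psi>1_ge_1[of x] that
    by (meson ennreal_leI mult_right_mono order_trans zero_le_one)
  then show ?thesis using that by blast
qed

lemma lyapunov_bounded:
  obtains c where "\<And>x. P 1 (\<lambda>y. ennreal (\<psi>1 y)) x \<le> ennreal (c * \<psi>1 x)"
proof -
  obtain c where c: "c > 0"
    "\<And>x. P 1 (\<lambda>y. ennreal (\<psi>1 y)) x \<le> ennreal (c * exp (- \<beta> * (norm x - p * norm (F x))) * \<psi>1 x)"
    using lyapunov_drift by blast
  obtain B where "\<And>x. B \<le> norm x - p * norm (F x)" using drift_bounded_below by blast
  then have "c * exp (- \<beta> * (norm x - p * norm (F x))) \<le> c * exp (- \<beta> * B)" for x
    using c(1) \<beta>_pos by (simp add: mult_left_mono)
  then have "P 1 (\<lambda>y. ennreal (\<psi>1 y)) x \<le> ennreal (c * exp (- \<beta> * B) * \<psi>1 x)" for x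
    using c(2)[of x] \<psi>1_ge_1[of x]
    by (meson ennreal_leI mult_right_mono order_trans zero_le_one)
  then show ?thesis using that by blast
qed

lemma P_one_indicator_upper:
  assumes "K0 \<subseteq> E" "K0 \<in> sets borel" "K0 \<subseteq> cball 0 r"
  shows "P 1 (indicator K0) x \<le> ennreal (C * exp r / Z) * emeasure lborel K0"
proof -
  have "kernel x y * indicator K0 y \<le> ennreal (C * exp r / Z) * indicator K0 y" for y
  proof (cases "y \<in> K0")
    case True
    then have y: "y \<in> E" "norm y \<le> r" using assms by auto
    have "C * exp (norm y) \<le> C * exp r" using y(2) C_pos by simp
    then have "G y \<le> C * exp r" using G_growth[OF y(1)] by linarith
    then have "gaussian_density m S (y - F x) * G y \<le> 1 / Z * (C * exp r)"
      using density_le density_nonneg G_pos[OF y(1)] Z_pos by (intro mult_mono) auto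
    then show ?thesis unfolding kernel_def using True y density_nonneg G_pos[OF y(1)]
      by (simp add: ennreal_mult[symmetric] ennreal_leI)
  qed simp
  then have "P 1 (indicator K0) x \<le> (\<integral>\<^sup>+ y. ennreal (C * exp r / Z) * indicator K0 y \<partial>lborel)"
    unfolding P_one by (intro nn_integral_mono)
  also have "\<dots> = ennreal (C * exp r / Z) * emeasure lborel K0"
    using assms(2) by (simp add: nn_integral_cmult_indicator)
  finally show ?thesis .
qed

lemma P_one_indicator_lower:
  assumes "K0 \<subseteq> E" "K0 \<in> sets borel" "K0 \<subseteq> cball 0 R0"
  obtains l where "l > 0" "\<And>x. norm x \<le> r \<Longrightarrow> ennreal l * emeasure lborel K0 \<le> P 1 (indicator K0) x"
proof -
  obtain M where M: "M \<ge> 0" "\<And>x. norm x \<le> r \<Longrightarrow> norm (F x) \<le> M" using F_bounded by blast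
  obtain g where g: "g > 0" "\<And>y. y \<in> E \<Longrightarrow> norm y \<le> R0 \<Longrightarrow> g \<le> G y" using G_lower by blast
  define l where "l = exp (- b * (R0 + M + norm m)^2) / Z * g"
  have "ennreal l * emeasure lborel K0 \<le> P 1 (indicator K0) x" if "norm x \<le> r" for x
  proof -
    have "ennreal l * emeasure lborel K0 = (\<integral>\<^sup>+ y. ennreal l * indicator K0 y \<partial>lborel)"
      using assms(2) by (simp add: nn_integral_cmult_indicator)
    also have "\<dots> \<le> P 1 (indicator K0) x"
      unfolding P_one
    proof (intro nn_integral_mono)
      fix y
      show "ennreal l * indicator K0 y \<le> kernel x y * indicator K0 y"
      proof (cases "y \<in> K0")
        case True
        then have "y \<in> E" "norm y \<le> R0" using assms(1,3) by auto
        then show ?thesis using kernel_lower[of y R0 x M g] M(2)[OF that] g True unfolding l_def by simp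
      qed simp
    qed
    finally show ?thesis .
  qed
  moreover have "l > 0" unfolding l_def using Z_pos g by simp
  ultimately show ?thesis using that by blast
qed

lemma kernel_minorized_bounded:
  assumes "K \<subseteq> E" "K \<subseteq> cball 0 R"
  shows "\<exists>\<kappa>>0. \<forall>x\<in>K. \<forall>y\<in>K. ennreal \<kappa> \<le> kernel x y"
proof -
  obtain M where M: "M \<ge> 0" "\<And>x. norm x \<le> R \<Longrightarrow> norm (F x) \<le> M" using F_bounded by blast
  obtain g where g: "g > 0" "\<And>y. y \<in> E \<Longrightarrow> norm y \<le> R \<Longrightarrow> g \<le> G y" using G_lower by blast
  have "\<forall>x\<in>K. \<forall>y\<in>K. ennreal (exp (- b * (R + M + norm m)^2) / Z * g) \<le> kernel x y"
    using kernel_lower M g assms by (meson less_imp_le mem_cball_0 subsetD)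
  moreover have "exp (- b * (R + M + norm m)^2) / Z * g > 0" using Z_pos g by simp
  ultimately show ?thesis by blast
qed

lemma kernel_comparable_near:
  obtains A where "\<And>y y' z. norm (F y) \<le> M \<Longrightarrow> norm (F y') \<le> M \<Longrightarrow> norm z \<le> L \<Longrightarrow>
    kernel y z \<le> ennreal A * kernel y' z"
proof -
  define U where "U = exp (a * (M + norm m)^2) / Z"
  define Lo where "Lo = exp (- 2 * b * (M + norm m)^2) / Z"
  have U: "U > 0" and Lo: "Lo > 0" unfolding U_def Lo_def using Z_pos by simp_all
  define A where "A = U * exp (2 * b * L^2) / Lo"
  have "kernel y z \<le> ennreal A * kernel y' z"
    if y: "norm (F y) \<le> M" "norm (F y') \<le> M" and z: "norm z \<le> L" for y y' z
  proof -
    have "norm z ^ 2 \<le> L ^ 2" using z by (simp add: power_mono)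
    then have "0 \<le> 2 * b * (L ^ 2 - norm z ^ 2)" using b_pos by simp
    moreover have "0 \<le> (a/2) * norm z ^ 2" using a_pos by simp
    ultimately have "- (a/2) * norm z ^ 2 \<le> 2 * b * L^2 - 2 * b * norm z ^ 2"
      by (simp add: algebra_simps)
    then have "U * exp (- (a/2) * norm z ^ 2) \<le> U * exp (2 * b * L^2 - 2 * b * norm z ^ 2)"
      using U by simp
    with density_upper_shifted[OF y(1), of z]
    have "gaussian_density m S (z - F y) \<le> U * exp (2 * b * L^2 - 2 * b * norm z ^ 2)"
      unfolding U_def by (rule order_trans)
    also have "\<dots> = A * (Lo * exp (- (2 * b) * norm z ^ 2))"
      unfolding A_def using Lo by (simp add: exp_diff exp_minus field_simps)
    also have "\<dots> \<le> A * gaussian_density m S (z - F y')"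
    proof (rule mult_left_mono)
      show "Lo * exp (- (2 * b) * norm z ^ 2) \<le> gaussian_density m S (z - F y')"
        using density_lower_shifted[OF y(2), of z] unfolding Lo_def by simp
      show "0 \<le> A" unfolding A_def using U Lo by simp
    qed
    finally have "ennreal (gaussian_density m S (z - F y)) \<le> ennreal A * ennreal (gaussian_density m S (z - F y'))"
      using density_nonneg by (simp add: ennreal_mult''[symmetric] ennreal_leI)
    then have "ennreal (gaussian_density m S (z - F y)) * (ennreal (G z) * indicator E z)
        \<le> (ennreal A * ennreal (gaussian_density m S (z - F y'))) * (ennreal (G z) * indicator E z)"
      by (rule mult_right_mono) simp
    then show "kernel y z \<le> ennreal A * kernel y' z"
      unfolding kernel_def by (simp add: mult.assoc)
  qed
  then show ?thesis using that by blast
qed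

lemma kernel_tail_bound:
  assumes "norm (F y) \<le> M"
  shows "kernel y z * ennreal (\<psi>1 z)
    \<le> ennreal (C * exp (a * (M + norm m)^2) / Z * exp (- (a/2) * norm z ^ 2 + (1 + \<beta>) * norm z))"
proof (cases "z \<in> E")
  case True
  have "gaussian_density m S (z - F y) * G z * \<psi>1 z
      \<le> exp (a * (M + norm m)^2) / Z * exp (- (a/2) * norm z ^ 2) * (C * exp (norm z)) * exp (\<beta> * norm z)"
    using density_upper_shifted[OF assms, of z] G_growth[OF True] G_pos[OF True] density_nonneg Z_pos
    unfolding \<psi>1_def by (intro mult_mono) auto
  also have "\<dots> = C * exp (a * (M + norm m)^2) / Z * exp (- (a/2) * norm z ^ 2 + (1 + \<beta>) * norm z)"
    by (simp add: exp_add[symmetric] algebra_simps)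
  finally show ?thesis
    unfolding kernel_def using True G_pos[OF True] density_nonneg \<psi>1_ge_1[of z]
    by (simp add: ennreal_mult[symmetric] ennreal_leI)
qed (simp add: kernel_outside)

lemma kernel_comparable_bounded:
  assumes "K \<subseteq> cball 0 R" and "\<epsilon> > 0"
  shows "\<exists>A \<tau>. \<tau> \<in> borel_measurable borel \<and> (\<integral>\<^sup>+ z. \<tau> z \<partial>lborel) \<le> ennreal \<epsilon> \<and>
    (\<forall>y\<in>K. \<forall>y'\<in>K. \<forall>z. kernel y z \<le> ennreal A * kernel y' z \<or> kernel y z * ennreal (\<psi>1 z) \<le> \<tau> z)"
proof -
  obtain M where M: "M \<ge> 0" "\<And>x. norm x \<le> R \<Longrightarrow> norm (F x) \<le> M" using F_bounded by blast
  have FK: "norm (F y) \<le> M" if "y \<in> K" for y using M(2) that assms(1) by auto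
  define U where "U = C * exp (a * (M + norm m)^2) / Z"
  have U: "U > 0" unfolding U_def using C_pos Z_pos by simp
  obtain L where L: "(\<integral>\<^sup>+ z. indicator {z. L < norm z} z *
      ennreal (exp (- (a/2) * norm (z::real^'d)^2 + (1 + \<beta>) * norm z)) \<partial>lborel) < ennreal (\<epsilon> / U)"
    using nn_integral_exp_neg_quadratic_tail[of "a/2" "\<epsilon> / U"] a_pos assms(2) U by auto
  obtain A where A: "\<And>y y' z. norm (F y) \<le> M \<Longrightarrow> norm (F y') \<le> M \<Longrightarrow> norm z \<le> L \<Longrightarrow>
      kernel y z \<le> ennreal A * kernel y' z"
    using kernel_comparable_near by blast
  define \<tau> where "\<tau> z = ennreal U * (indicator {z. L < norm z} z
    * ennreal (exp (- (a/2) * norm (z::real^'d)^2 + (1 + \<beta>) * norm z)))" for z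
  have "\<tau> \<in> borel_measurable borel" unfolding \<tau>_def[abs_def] by measurable
  moreover have "(\<integral>\<^sup>+ z. \<tau> z \<partial>lborel) \<le> ennreal \<epsilon>"
  proof -
    have "(\<integral>\<^sup>+ z. \<tau> z \<partial>lborel) \<le> ennreal U * ennreal (\<epsilon> / U)"
      unfolding \<tau>_def using L by (subst nn_integral_cmult) (auto intro: mult_left_mono)
    also have "\<dots> = ennreal \<epsilon>" using U assms(2) by (simp add: ennreal_mult[symmetric])
    finally show ?thesis .
  qed
  moreover have "kernel y z \<le> ennreal A * kernel y' z \<or> kernel y z * ennreal (\<psi>1 z) \<le> \<tau> z"
    if "y \<in> K" "y' \<in> K" for y y' z
  proof (cases "L < norm z")
    case True
    then have "kernel y z * ennreal (\<psi>1 z) \<le> \<tau> z"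
      using kernel_tail_bound[OF FK[OF \<open>y \<in> K\<close>], of z] U unfolding \<tau>_def U_def
      by (simp add: ennreal_mult[symmetric])
    then show ?thesis ..
  qed (use A FK that in auto)
  ultimately show ?thesis by blast
qed

lemma sub_eigenfunction_on_balls:
  obtains \<theta>0 R0 where "\<theta>0 > 0" "emeasure lborel (E \<inter> cball 0 R0) > 0"
    "\<And>R. R0 \<le> R \<Longrightarrow> \<exists>\<psi> c. \<psi> \<in> borel_measurable borel \<and> c > 0 \<and>
       (\<forall>x. 0 \<le> \<psi> x \<and> \<psi> x \<le> indicator (E \<inter> cball 0 R) x) \<and> (\<forall>x\<in>E \<inter> cball 0 R. c \<le> \<psi> x) \<and>
       (\<forall>x. ennreal (\<theta>0 / 2 * \<psi> x) \<le> P 1 (\<lambda>y. ennreal (\<psi> y)) x)"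
proof -
  have "E \<in> sets lborel" by simp
  then obtain R0 where R0: "R0 > 0" "emeasure lborel (E \<inter> cball 0 R0) > 0"
    using exists_cball_positive_measure E_positive by blast
  define K0 where "K0 = E \<inter> cball 0 R0"
  have K0: "K0 \<subseteq> E" "K0 \<in> sets borel" "K0 \<subseteq> cball 0 R0" unfolding K0_def by auto
  define \<mu>0 where "\<mu>0 = enn2real (emeasure lborel K0)"
  have "emeasure lborel K0 \<le> emeasure lborel (cball (0::real^'d) R0)"
    unfolding K0_def by (intro emeasure_mono) auto
  then have \<mu>0: "emeasure lborel K0 = ennreal \<mu>0" "\<mu>0 > 0"
    using emeasure_lborel_cball_finite[of "0::real^'d" R0] R0(2) unfolding \<mu>0_def K0_def[symmetric]
    by (auto simp: less_top top_unique enn2real_positive_iff)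
  obtain l0 where l0: "l0 > 0"
    "\<And>x. norm x \<le> R0 \<Longrightarrow> ennreal l0 * emeasure lborel K0 \<le> P 1 (indicator K0) x"
    using P_one_indicator_lower[OF K0] by blast
  have "\<exists>\<psi> c. \<psi> \<in> borel_measurable borel \<and> c > 0 \<and>
       (\<forall>x. 0 \<le> \<psi> x \<and> \<psi> x \<le> indicator (E \<inter> cball 0 R) x) \<and> (\<forall>x\<in>E \<inter> cball 0 R. c \<le> \<psi> x) \<and>
       (\<forall>x. ennreal (l0 * \<mu>0 / 2 * \<psi> x) \<le> P 1 (\<lambda>y. ennreal (\<psi> y)) x)" if "R0 \<le> R" for R
  proof -
    have K: "K0 \<subseteq> E \<inter> cball 0 R" "E \<inter> cball 0 R \<in> sets borel"
      using that unfolding K0_def by auto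
    obtain l where l: "l > 0" "\<And>x. norm x \<le> R \<Longrightarrow> ennreal l * emeasure lborel K0 \<le> P 1 (indicator K0) x"
      using P_one_indicator_lower[OF K0] by blast
    show ?thesis
    proof (rule exists_sub_eigenfunction[OF K(1) K0(2) K(2), of "C * exp R0 / Z * \<mu>0" "l0 * \<mu>0" "l * \<mu>0"])
      show "P 1 (indicator K0) x \<le> ennreal (C * exp R0 / Z * \<mu>0)" for x
        using P_one_indicator_upper[OF K0, of x] C_pos Z_pos \<mu>0 by (simp add: ennreal_mult[symmetric])
      show "ennreal (l0 * \<mu>0) \<le> P 1 (indicator K0) x" if "x \<in> K0" for x
        using l0(2)[of x] that l0 \<mu>0 unfolding K0_def by (simp add: ennreal_mult[symmetric])
      show "ennreal (l * \<mu>0) \<le> P 1 (indicator K0) x" if "x \<in> E \<inter> cball 0 R" for x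
        using l(2)[of x] that l \<mu>0 by (simp add: ennreal_mult[symmetric])
    qed (use C_pos Z_pos \<mu>0 l0 l in \<open>auto simp: Ball_def\<close>)
  qed
  moreover have "l0 * \<mu>0 > 0" using l0 \<mu>0 by simp
  ultimately show ?thesis using that R0(2) by blast
qed

theorem condition_G: "condition_G (restrict_space lborel E) P"
proof -
  obtain \<theta>0 R0 where \<theta>0: "\<theta>0 > 0" and R0: "emeasure lborel (E \<inter> cball 0 R0) > 0"
    and \<psi>2_exists: "\<And>R. R0 \<le> R \<Longrightarrow> \<exists>\<psi> c. \<psi> \<in> borel_measurable borel \<and> c > 0 \<and>
       (\<forall>x. 0 \<le> \<psi> x \<and> \<psi> x \<le> indicator (E \<inter> cball 0 R) x) \<and> (\<forall>x\<in>E \<inter> cball 0 R. c \<le> \<psi> x) \<and>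
       (\<forall>x. ennreal (\<theta>0 / 2 * \<psi> x) \<le> P 1 (\<lambda>y. ennreal (\<psi> y)) x)"
    using sub_eigenfunction_on_balls by blast
  define \<theta>1 where "\<theta>1 = \<theta>0 / 4"
  define \<theta>2 where "\<theta>2 = \<theta>0 / 2"
  have \<theta>: "\<theta>1 > 0" "\<theta>1 < \<theta>2" unfolding \<theta>1_def \<theta>2_def using \<theta>0 by auto
  obtain R1 where R1: "\<And>x. R1 \<le> norm x \<Longrightarrow> P 1 (\<lambda>y. ennreal (\<psi>1 y)) x \<le> ennreal (\<theta>1 * \<psi>1 x)"
    using lyapunov_far[OF \<theta>(1)] by blast
  define R where "R = max R0 R1"
  define K where "K = E \<inter> cball 0 R"
  have K: "K \<subseteq> E" "K \<in> sets borel" "K \<subseteq> cball 0 R" "E \<inter> cball 0 R0 \<subseteq> K"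
    unfolding K_def R_def by auto
  have "R0 \<le> R" unfolding R_def by simp
  then obtain \<psi>2 c where \<psi>2: "\<psi>2 \<in> borel_measurable borel" "c > 0"
    "\<And>x. 0 \<le> \<psi>2 x" "\<And>x. \<psi>2 x \<le> indicator K x" "\<And>x. x \<in> K \<Longrightarrow> c \<le> \<psi>2 x"
    "\<And>x. ennreal (\<theta>2 * \<psi>2 x) \<le> P 1 (\<lambda>y. ennreal (\<psi>2 y)) x"
    using \<psi>2_exists[of R] unfolding K_def[symmetric] \<theta>2_def by blast
  have \<psi>1_K: "\<psi>1 x \<le> exp (\<beta> * R)" if "x \<in> K" for x
    using that K(3) \<beta>_pos unfolding \<psi>1_def by (auto intro: mult_left_mono)
  interpret criterion: fk_criterion F m S E G K \<psi>1 \<psi>2 \<theta>1 \<theta>2 "c * exp (- \<beta> * R)"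
  proof
    show "emeasure lborel K < \<infinity>"
      using emeasure_mono[OF K(3), of lborel] emeasure_lborel_cball_finite[of "0::real^'d" R]
      by (simp add: le_less_trans)
    show "emeasure lborel K > 0"
      using R0 emeasure_mono[OF K(4), of lborel] K(2) by (simp add: less_le_trans)
    show "bdd_above (\<psi>1 ` K)" using \<psi>1_K by (rule bdd_aboveI2)
    show "\<psi>2 x \<le> indicator K x * \<psi>1 x" for x
      using \<psi>2(4)[of x] \<psi>1_ge_1[of x] by (cases "x \<in> K") auto
    show "c * exp (- \<beta> * R) * \<psi>1 x \<le> \<psi>2 x" if "x \<in> K" for x
    proof -
      have "exp (- \<beta> * R) * \<psi>1 x \<le> 1" using \<psi>1_K[OF that] by (simp add: exp_minus field_simps)
      then have "c * (exp (- \<beta> * R) * \<psi>1 x) \<le> c" using \<psi>2(2) by (simp add: mult_left_le)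
      then show ?thesis using \<psi>2(5)[OF that] by (simp add: mult.assoc)
    qed
    show "P 1 (\<lambda>y. ennreal (\<psi>1 y)) x \<le> ennreal (\<theta>1 * \<psi>1 x)" if "x \<in> E" "x \<notin> K" for x
      using R1 that unfolding K_def R_def by auto
    show "\<exists>c. \<forall>x\<in>K. P 1 (\<lambda>y. ennreal (\<psi>1 y)) x \<le> ennreal (c * \<psi>1 x)"
      using lyapunov_bounded by metis
    show "\<exists>\<kappa>>0. \<forall>x\<in>K. \<forall>y\<in>K. ennreal \<kappa> \<le> kernel x y"
      using kernel_minorized_bounded K by blast
    show "\<exists>A \<tau>. \<tau> \<in> borel_measurable borel \<and> (\<integral>\<^sup>+ z. \<tau> z \<partial>lborel) \<le> ennreal \<epsilon> \<and>
      (\<forall>y\<in>K. \<forall>y'\<in>K. \<forall>z. kernel y z \<le> ennreal A * kernel y' z \<or> kernel y z * ennreal (\<psi>1 z) \<le> \<tau> z)"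
      if "\<epsilon> > 0" for \<epsilon>
      using kernel_comparable_bounded[OF K(3) that] .
  qed (use K \<psi>2 \<psi>1_ge_1 \<theta> \<beta>_pos in auto)
  show ?thesis by (rule criterion.condition_G)
qed

end

theorem proposition3p1:
  fixes F :: "real^'d \<Rightarrow> real^'d" and m :: "real^'d" and S :: "real^'d^'d"
    and E :: "(real^'d) set" and G :: "real^'d \<Rightarrow> real"
  assumes F_meas: "F \<in> borel_measurable borel"
    and F_lb: "locally_bounded_on UNIV F"
    and gauss: "nondegenerate_covariance S"
    and E_meas: "E \<in> sets lborel" and E_pos: "emeasure lborel E > 0"
    and G_meas: "G \<in> borel_measurable (restrict_space borel E)"
    and G_pos: "\<forall>x\<in>E. G x > 0"
    and invG_lb: "locally_bounded_on E (\<lambda>x. 1 / G x)"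
    and G_growth: "\<exists>C>0. \<forall>x\<in>E. G x \<le> C * exp (norm x)"
    and F_drift: "\<exists>p>1. filterlim (\<lambda>x. norm x - p * norm (F x)) at_top at_infinity"
  shows "condition_G (restrict_space lborel E) (fk_semigroup F m S E G)"
proof -
  obtain Z a b where Zab: "Z > 0" "a > 0" "b > 0"
    "\<And>v. exp (- b * norm (v - m) ^ 2) / Z \<le> gaussian_density m S v"
    "\<And>v. gaussian_density m S v \<le> exp (- a * norm (v - m) ^ 2) / Z"
    using gaussian_density_bounds[OF gauss] by blast
  obtain C where C: "C > 0" "\<And>x. x \<in> E \<Longrightarrow> G x \<le> C * exp (norm x)" using G_growth by blast
  obtain p where p: "p > 1" "filterlim (\<lambda>x. norm x - p * norm (F x)) at_top at_infinity"
    using F_drift by blast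
  interpret gaussian_fk F m S E G p C Z a b
    using F_meas E_meas G_meas F_lb E_pos G_pos invG_lb C p Zab
    by unfold_locales auto
  show ?thesis by (rule condition_G)
qed

end
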